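(* Let $\mathfrak g$ be the $6$-dimensional real $2$-step nilpotent Lie algebra with a basis $\{e_1,\dots,e_6\}$ whose dual basis $\{e^1,\dots,e^6\}$ satisfies $de^i=0$ for $i=1,\dots,4$, $de^5=e^{13}-e^{24}$, $de^6=e^{14}+e^{23}$ (where $e^{ij}=e^i\wedge e^j$), and let $J$ be the complex structure on $\mathfrak g$ with $Je_1=-e_2$, $Je_2=e_1$, $Je_3=e_4$, $Je_4=-e_3$, $Je_5=e_6$, $Je_6=-e_5$. Let $G$ be the simply connected Lie group with Lie algebra $\mathfrak g$, endowed with the left-invariant complex structure $J$. Then every left-invariant Hermitian metric on $(G,J)$ is an expanding algebraic $HCF_+$ soliton.
   Context: For a Hermitian metric $g$ with Chern connection (curvature $\Omega$, torsion $T$, $T_{js\bar p}=g_{l\bar p}T^l_{js}$), $S(g)_{j\bar k}=g^{\bar rs}\Omega_{s\bar rj\bar k}$, $Q^2(g)_{j\bar k}=g^{\bar pq}g^{\bar rs}T_{sq\bar k}T_{\overline{rp}j}$, $\Theta(g)=S(g)+\frac12Q^2(g)$, and for left-invariant $g$, $\Theta_g$ is the endomorphism of $\mathfrak g$ with $g(\Theta_g\cdot,\cdot)=\Theta(g)$. A left-invariant Hermitian metric $g$ is an algebraic $HCF_+$ soliton if $\Theta_g=c\,\mathrm{Id}+D$ for some $c\in\mathbb R$ and some derivation $D$ of the Lie algebra with $[D,J]=0$; it is expanding if $c<0$. *)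

theory Defs
  imports Complex_Main
begin

text \<open>
Left-invariant objects on a simply connected Lie group are encoded by their values on the Lie
algebra g = R^n with standard basis e_1..e_n (indices 1..n, vectors as functions nat => field,
coordinates outside {1..n} are ignored).  Complexification: the same formulas with complex
coefficients (complex-multilinear extension).
  Bracket:     [e_a,e_b] = sum_c C a b c e_c
  Endomorphism M:  M e_a = sum_b M a b e_b
  Metric:      g(e_a,e_b) = G a b
  Connection:  nabla_{e_a} e_b = sum_c Gamma a b c e_c
\<close>

definition lie :: "(nat \<Rightarrow> nat \<Rightarrow> nat \<Rightarrow> real) \<Rightarrow> nat \<Rightarrow> (nat \<Rightarrow> 'a::real_field) \<Rightarrow> (nat \<Rightarrow> 'a) \<Rightarrow> nat \<Rightarrow> 'a" where
  "lie C n u v = (\<lambda>c. if c \<in> {1..n} then (\<Sum>a=1..n. \<Sum>b=1..n. of_real (C a b c) * u a * v b) else 0)"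

definition conn :: "(nat \<Rightarrow> nat \<Rightarrow> nat \<Rightarrow> real) \<Rightarrow> nat \<Rightarrow> (nat \<Rightarrow> 'a::real_field) \<Rightarrow> (nat \<Rightarrow> 'a) \<Rightarrow> nat \<Rightarrow> 'a" where
  "conn \<Gamma> n u v = (\<lambda>c. if c \<in> {1..n} then (\<Sum>a=1..n. \<Sum>b=1..n. of_real (\<Gamma> a b c) * u a * v b) else 0)"

definition endo :: "(nat \<Rightarrow> nat \<Rightarrow> real) \<Rightarrow> nat \<Rightarrow> (nat \<Rightarrow> 'a::real_field) \<Rightarrow> nat \<Rightarrow> 'a" where
  "endo M n u = (\<lambda>b. if b \<in> {1..n} then (\<Sum>a=1..n. of_real (M a b) * u a) else 0)"

definition gc :: "(nat \<Rightarrow> nat \<Rightarrow> real) \<Rightarrow> nat \<Rightarrow> (nat \<Rightarrow> 'a::real_field) \<Rightarrow> (nat \<Rightarrow> 'a) \<Rightarrow> 'a" where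
  "gc G n u v = (\<Sum>a=1..n. \<Sum>b=1..n. of_real (G a b) * u a * v b)"

definition tors :: "(nat \<Rightarrow> nat \<Rightarrow> nat \<Rightarrow> real) \<Rightarrow> (nat \<Rightarrow> nat \<Rightarrow> nat \<Rightarrow> real) \<Rightarrow> nat \<Rightarrow> (nat \<Rightarrow> 'a::real_field) \<Rightarrow> (nat \<Rightarrow> 'a) \<Rightarrow> nat \<Rightarrow> 'a" where
  "tors C \<Gamma> n u v = (\<lambda>c. conn \<Gamma> n u v c - conn \<Gamma> n v u c - lie C n u v c)"

definition curv :: "(nat \<Rightarrow> nat \<Rightarrow> nat \<Rightarrow> real) \<Rightarrow> (nat \<Rightarrow> nat \<Rightarrow> nat \<Rightarrow> real) \<Rightarrow> nat \<Rightarrow> (nat \<Rightarrow> 'a::real_field) \<Rightarrow> (nat \<Rightarrow> 'a) \<Rightarrow> (nat \<Rightarrow> 'a) \<Rightarrow> nat \<Rightarrow> 'a" where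
  "curv C \<Gamma> n u v w = (\<lambda>c. conn \<Gamma> n u (conn \<Gamma> n v w) c - conn \<Gamma> n v (conn \<Gamma> n u w) c
                           - conn \<Gamma> n (lie C n u v) w c)"

definition hermitian_metric :: "(nat \<Rightarrow> nat \<Rightarrow> real) \<Rightarrow> nat \<Rightarrow> (nat \<Rightarrow> nat \<Rightarrow> real) \<Rightarrow> bool" where
  "hermitian_metric J n G \<longleftrightarrow>
     (\<forall>X Y :: nat \<Rightarrow> real. gc G n X Y = gc G n Y X) \<and>
     (\<forall>X :: nat \<Rightarrow> real. (\<exists>a\<in>{1..n}. X a \<noteq> 0) \<longrightarrow> gc G n X X > 0) \<and>
     (\<forall>X Y :: nat \<Rightarrow> real. gc G n (endo J n X) (endo J n Y) = gc G n X Y)"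

text \<open>Chern connection: the Hermitian connection (nabla g = 0, nabla J = 0) whose torsion has
vanishing (1,1)-part, i.e. T(JX,JY) = -T(X,Y).\<close>
definition chern_connection :: "(nat \<Rightarrow> nat \<Rightarrow> nat \<Rightarrow> real) \<Rightarrow> (nat \<Rightarrow> nat \<Rightarrow> real) \<Rightarrow> (nat \<Rightarrow> nat \<Rightarrow> real) \<Rightarrow> nat \<Rightarrow> (nat \<Rightarrow> nat \<Rightarrow> nat \<Rightarrow> real) \<Rightarrow> bool" where
  "chern_connection C J G n \<Gamma> \<longleftrightarrow>
     (\<forall>a b c. a \<notin> {1..n} \<or> b \<notin> {1..n} \<or> c \<notin> {1..n} \<longrightarrow> \<Gamma> a b c = 0) \<and>
     (\<forall>X Y Z :: nat \<Rightarrow> real. gc G n (conn \<Gamma> n X Y) Z + gc G n Y (conn \<Gamma> n X Z) = 0) \<and>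
     (\<forall>X Y :: nat \<Rightarrow> real. conn \<Gamma> n X (endo J n Y) = endo J n (conn \<Gamma> n X Y)) \<and>
     (\<forall>X Y :: nat \<Rightarrow> real. tors C \<Gamma> n (endo J n X) (endo J n Y) = (\<lambda>c. - tors C \<Gamma> n X Y c))"

definition chern_christoffel :: "(nat \<Rightarrow> nat \<Rightarrow> nat \<Rightarrow> real) \<Rightarrow> (nat \<Rightarrow> nat \<Rightarrow> real) \<Rightarrow> (nat \<Rightarrow> nat \<Rightarrow> real) \<Rightarrow> nat \<Rightarrow> nat \<Rightarrow> nat \<Rightarrow> nat \<Rightarrow> real" where
  "chern_christoffel C J G n = (THE \<Gamma>. chern_connection C J G n \<Gamma>)"

definition cconj :: "(nat \<Rightarrow> complex) \<Rightarrow> nat \<Rightarrow> complex" where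
  "cconj u = (\<lambda>a. cnj (u a))"

text \<open>Index computations use a basis F 1, ..., F m of the (1,0)-vectors (complex vectors in the
complexified Lie algebra); g_{j kbar} = g(F j, conj (F k)).\<close>
definition frame_metric :: "(nat \<Rightarrow> nat \<Rightarrow> real) \<Rightarrow> nat \<Rightarrow> (nat \<Rightarrow> nat \<Rightarrow> complex) \<Rightarrow> nat \<Rightarrow> nat \<Rightarrow> complex" where
  "frame_metric G n F j k = gc G n (F j) (cconj (F k))"

text \<open>inv_frame_metric p q = g^{pbar q}, i.e. sum_q g^{pbar q} g_{q rbar} = delta_{pr}.\<close>
definition inv_frame_metric :: "(nat \<Rightarrow> nat \<Rightarrow> real) \<Rightarrow> nat \<Rightarrow> (nat \<Rightarrow> nat \<Rightarrow> complex) \<Rightarrow> nat \<Rightarrow> nat \<Rightarrow> nat \<Rightarrow> complex" where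
  "inv_frame_metric G n F m = (THE H.
      (\<forall>p q. p \<notin> {1..m} \<or> q \<notin> {1..m} \<longrightarrow> H p q = 0) \<and>
      (\<forall>p\<in>{1..m}. \<forall>r\<in>{1..m}. (\<Sum>q=1..m. H p q * frame_metric G n F q r) = (if p = r then 1 else 0)))"

text \<open>S(g)(u,v) = g^{rbar s} Omega(F s, conj(F r), u, v), with Omega(A,B,U,V) = g(R(A,B)U, V);
so S(g)_{j kbar} = S(g)(F j, conj(F k)).\<close>
definition chern_S :: "(nat \<Rightarrow> nat \<Rightarrow> nat \<Rightarrow> real) \<Rightarrow> (nat \<Rightarrow> nat \<Rightarrow> real) \<Rightarrow> (nat \<Rightarrow> nat \<Rightarrow> real) \<Rightarrow> nat \<Rightarrow> (nat \<Rightarrow> nat \<Rightarrow> complex) \<Rightarrow> nat \<Rightarrow> (nat \<Rightarrow> complex) \<Rightarrow> (nat \<Rightarrow> complex) \<Rightarrow> complex" where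
  "chern_S C J G n F m u v =
     (let \<Gamma> = chern_christoffel C J G n; H = inv_frame_metric G n F m in
      \<Sum>r=1..m. \<Sum>s=1..m. H r s * gc G n (curv C \<Gamma> n (F s) (cconj (F r)) u) v)"

text \<open>Q^2(g)(u,v) = g^{pbar q} g^{rbar s} T(F s, F q, v) T(conj F r, conj F p, u), with
T(A,B,V) = g(T(A,B),V); so T_{sq kbar} = T(F s, F q, conj F k) and
T_{(rp)bar j} = conj T_{rp jbar} = T(conj F r, conj F p, F j).\<close>
definition chern_Q2 :: "(nat \<Rightarrow> nat \<Rightarrow> nat \<Rightarrow> real) \<Rightarrow> (nat \<Rightarrow> nat \<Rightarrow> real) \<Rightarrow> (nat \<Rightarrow> nat \<Rightarrow> real) \<Rightarrow> nat \<Rightarrow> (nat \<Rightarrow> nat \<Rightarrow> complex) \<Rightarrow> nat \<Rightarrow> (nat \<Rightarrow> complex) \<Rightarrow> (nat \<Rightarrow> complex) \<Rightarrow> complex" where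
  "chern_Q2 C J G n F m u v =
     (let \<Gamma> = chern_christoffel C J G n; H = inv_frame_metric G n F m in
      \<Sum>p=1..m. \<Sum>q=1..m. \<Sum>r=1..m. \<Sum>s=1..m.
        H p q * H r s * gc G n (tors C \<Gamma> n (F s) (F q)) v
          * gc G n (tors C \<Gamma> n (cconj (F r)) (cconj (F p))) u)"

definition chern_Theta :: "(nat \<Rightarrow> nat \<Rightarrow> nat \<Rightarrow> real) \<Rightarrow> (nat \<Rightarrow> nat \<Rightarrow> real) \<Rightarrow> (nat \<Rightarrow> nat \<Rightarrow> real) \<Rightarrow> nat \<Rightarrow> (nat \<Rightarrow> nat \<Rightarrow> complex) \<Rightarrow> nat \<Rightarrow> (nat \<Rightarrow> complex) \<Rightarrow> (nat \<Rightarrow> complex) \<Rightarrow> complex" where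
  "chern_Theta C J G n F m u v = chern_S C J G n F m u v + chern_Q2 C J G n F m u v / 2"

definition part10 :: "(nat \<Rightarrow> nat \<Rightarrow> real) \<Rightarrow> nat \<Rightarrow> (nat \<Rightarrow> real) \<Rightarrow> nat \<Rightarrow> complex" where
  "part10 J n X = (\<lambda>a. (complex_of_real (X a) - \<i> * complex_of_real (endo J n X a)) / 2)"

text \<open>Theta(g) as a real symmetric bilinear form on g, with the same convention that relates
g_{j kbar} to g:  Theta(X,Y) = Theta(X^{1,0}, Y^{0,1}) + Theta(Y^{1,0}, X^{0,1}).\<close>
definition Theta_form :: "(nat \<Rightarrow> nat \<Rightarrow> nat \<Rightarrow> real) \<Rightarrow> (nat \<Rightarrow> nat \<Rightarrow> real) \<Rightarrow> (nat \<Rightarrow> nat \<Rightarrow> real) \<Rightarrow> nat \<Rightarrow> (nat \<Rightarrow> nat \<Rightarrow> complex) \<Rightarrow> nat \<Rightarrow> (nat \<Rightarrow> real) \<Rightarrow> (nat \<Rightarrow> real) \<Rightarrow> complex" where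
  "Theta_form C J G n F m X Y =
     chern_Theta C J G n F m (part10 J n X) (cconj (part10 J n Y))
   + chern_Theta C J G n F m (part10 J n Y) (cconj (part10 J n X))"

definition is_derivation :: "(nat \<Rightarrow> nat \<Rightarrow> nat \<Rightarrow> real) \<Rightarrow> nat \<Rightarrow> (nat \<Rightarrow> nat \<Rightarrow> real) \<Rightarrow> bool" where
  "is_derivation C n D \<longleftrightarrow>
     (\<forall>X Y :: nat \<Rightarrow> real. endo D n (lie C n X Y) = (\<lambda>c. lie C n (endo D n X) Y c + lie C n X (endo D n Y) c))"

text \<open>Algebraic HCF_+ soliton with constant c:  Theta_g = c Id + D, where Theta_g is defined by
g(Theta_g X, Y) = Theta(g)(X,Y), D a derivation with [D,J] = 0.\<close>
definition algebraic_HCF_soliton :: "(nat \<Rightarrow> nat \<Rightarrow> nat \<Rightarrow> real) \<Rightarrow> (nat \<Rightarrow> nat \<Rightarrow> real) \<Rightarrow> nat \<Rightarrow> (nat \<Rightarrow> nat \<Rightarrow> complex) \<Rightarrow> nat \<Rightarrow> (nat \<Rightarrow> nat \<Rightarrow> real) \<Rightarrow> real \<Rightarrow> bool" where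
  "algebraic_HCF_soliton C J n F m G c \<longleftrightarrow>
     (\<exists>D. is_derivation C n D \<and>
          (\<forall>X :: nat \<Rightarrow> real. endo D n (endo J n X) = endo J n (endo D n X)) \<and>
          (\<forall>X Y :: nat \<Rightarrow> real.
              complex_of_real (gc G n (\<lambda>a. c * X a + endo D n X a) Y) = Theta_form C J G n F m X Y))"

text \<open>The concrete Lie algebra: de^5 = e^13 - e^24, de^6 = e^14 + e^23, with the convention
d alpha (X,Y) = - alpha([X,Y]); hence [e1,e3] = -e5, [e2,e4] = e5, [e1,e4] = -e6, [e2,e3] = -e6.\<close>
definition g6_bracket :: "nat \<Rightarrow> nat \<Rightarrow> nat \<Rightarrow> real" where
  "g6_bracket a b c =
     (if (a,b,c) = (1,3,5) then -1 else if (a,b,c) = (3,1,5) then 1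
      else if (a,b,c) = (2,4,5) then 1 else if (a,b,c) = (4,2,5) then -1
      else if (a,b,c) = (1,4,6) then -1 else if (a,b,c) = (4,1,6) then 1
      else if (a,b,c) = (2,3,6) then -1 else if (a,b,c) = (3,2,6) then 1 else 0)"

definition g6_J :: "nat \<Rightarrow> nat \<Rightarrow> real" where
  "g6_J a b =
     (if (a,b) = (1,2) then -1 else if (a,b) = (2,1) then 1
      else if (a,b) = (3,4) then 1 else if (a,b) = (4,3) then -1
      else if (a,b) = (5,6) then 1 else if (a,b) = (6,5) then -1 else 0)"

text \<open>A basis of the (1,0)-vectors (J Z = i Z): Z1 = e1 + i e2, Z2 = e3 - i e4, Z3 = e5 - i e6.\<close>
definition g6_frame :: "nat \<Rightarrow> nat \<Rightarrow> complex" where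
  "g6_frame j a =
     (if j = 1 then (if a = 1 then 1 else if a = 2 then \<i> else 0)
      else if j = 2 then (if a = 3 then 1 else if a = 4 then - \<i> else 0)
      else if j = 3 then (if a = 5 then 1 else if a = 6 then - \<i> else 0)
      else 0)"

end

theory Submission
  imports Defs
begin

text \<open>
In the (1,0)-frame Z1 = e1 + i e2, Z2 = e3 - i e4, Z3 = e5 - i e6 the only nonzero brackets are
[conj Z1, Z2] = -2 Z3 and [Z1, conj Z2] = -2 conj Z3.  This makes the Chern connection of an
arbitrary Hermitian metric g, with \<open>h\<^sub>j\<^sub>k = g(Z\<^sub>j, conj Z\<^sub>k)\<close>, explicit, and computing its
curvature and torsion gives
  \<open>\<Theta>(X,Y) = \<alpha> (g(X, conj Z\<^sub>3) g(Y, Z\<^sub>3) + g(Y, conj Z\<^sub>3) g(X, Z\<^sub>3))\<close>,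
  \<open>\<alpha> = 4 h\<^sup>1\<^sup>1 h\<^sup>2\<^sup>2 > 0\<close>.
So \<open>\<Theta>\<^sub>g\<close> vanishes on the g-orthogonal complement of the centre span {e5, e6} and is
\<open>\<lambda> = \<alpha> h\<^sub>3\<^sub>3\<close> times the identity on the centre.  With \<open>c = -\<lambda> < 0\<close>, the endomorphism
\<open>D = \<Theta>\<^sub>g - c Id\<close> acts as \<open>\<lambda>\<close> on that complement and as \<open>2\<lambda>\<close> on the centre; since the
algebra is 2-step nilpotent with derived algebra equal to the centre, D is a derivation, and it
commutes with J.
\<close>

declare One_nat_def [simp del]

lemma sum_1_to_6:
  "(\<Sum>a=1..6. (f::nat \<Rightarrow> _) a) = f 1 + f 2 + f 3 + f 4 + f 5 + (f 6 :: 'a::comm_monoid_add)"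
  by (simp add: numeral_eq_Suc add.assoc One_nat_def)

lemma sum_1_to_3: "(\<Sum>a=1..3. (f::nat \<Rightarrow> _) a) = f 1 + f 2 + (f 3 :: 'a::comm_monoid_add)"
  by (simp add: numeral_eq_Suc add.assoc One_nat_def)

lemma atLeastAtMost_1_6_cases: "a \<in> {1..6::nat} \<Longrightarrow> a = 1 \<or> a = 2 \<or> a = 3 \<or> a = 4 \<or> a = 5 \<or> a = 6"
  by auto

lemma atLeastAtMost_1_3_cases: "a \<in> {1..3::nat} \<Longrightarrow> a = 1 \<or> a = 2 \<or> a = 3"
  by auto

definition vec_single :: "nat \<Rightarrow> 'a::zero \<Rightarrow> nat \<Rightarrow> 'a" where
  "vec_single p s = (\<lambda>i. if i = p then s else 0)"

lemma gc_vec_single: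
  "p \<in> {1..n} \<Longrightarrow> q \<in> {1..n} \<Longrightarrow> gc G n (vec_single p s) (vec_single q t) = s * t * G p q"
  unfolding gc_def vec_single_def
  by (simp add: if_distrib[where f="\<lambda>x. _ * x"] if_distrib[where f="\<lambda>x. x * _"] sum.delta
      cong: if_cong)

lemma conn_vec_single:
  "a \<in> {1..n} \<Longrightarrow> b \<in> {1..n} \<Longrightarrow> c \<in> {1..n} \<Longrightarrow>
   conn \<Gamma> n (vec_single a (1::real)) (vec_single b 1) c = \<Gamma> a b c"
  unfolding conn_def vec_single_def
  by (simp add: if_distrib[where f="\<lambda>x. _ * x"] if_distrib[where f="\<lambda>x. x * _"] sum.delta
      cong: if_cong)

lemma gc_cong:
  "(\<And>a. a \<in> {1..n} \<Longrightarrow> u a = u' a) \<Longrightarrow> (\<And>a. a \<in> {1..n} \<Longrightarrow> v a = v' a) \<Longrightarrow>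
   gc G n u v = gc G n u' v'"
  unfolding gc_def by (intro sum.cong refl) auto

lemma conn_cong:
  "(\<And>a. a \<in> {1..n} \<Longrightarrow> u a = u' a) \<Longrightarrow> (\<And>a. a \<in> {1..n} \<Longrightarrow> v a = v' a) \<Longrightarrow>
   conn \<Gamma> n u v = conn \<Gamma> n u' v'"
  unfolding conn_def by (intro ext if_cong sum.cong refl) auto

lemma lie_cong:
  "(\<And>a. a \<in> {1..n} \<Longrightarrow> u a = u' a) \<Longrightarrow> (\<And>a. a \<in> {1..n} \<Longrightarrow> v a = v' a) \<Longrightarrow>
   lie C n u v = lie C n u' v'"
  unfolding lie_def by (intro ext if_cong sum.cong refl) auto

lemma endo_cong: "(\<And>a. a \<in> {1..n} \<Longrightarrow> u a = u' a) \<Longrightarrow> endo M n u = endo M n u'"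
  unfolding endo_def by (intro ext if_cong sum.cong refl) auto

lemma conn_outside: "c \<notin> {1..n} \<Longrightarrow> conn \<Gamma> n X Y c = 0"
  by (auto simp: conn_def)

lemma endo_outside: "c \<notin> {1..n} \<Longrightarrow> endo M n X c = 0"
  by (auto simp: endo_def)

lemma endo_linear:
  "endo M n (\<lambda>c. a * (X::nat \<Rightarrow> real) c + b * Y c) = (\<lambda>c. a * endo M n X c + b * endo M n Y c)"
  by (rule ext) (simp add: endo_def sum.distrib sum_distrib_left algebra_simps)

lemma conn_linear_left:
  "conn \<Gamma> n (\<lambda>c. a * (X::nat \<Rightarrow> real) c + b * X' c) Y =
   (\<lambda>c. a * conn \<Gamma> n X Y c + b * conn \<Gamma> n X' Y c)"
  by (rule ext) (simp add: conn_def sum.distrib sum_distrib_left algebra_simps)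

lemma conn_diff:
  "conn (\<lambda>a b c. \<Gamma>1 a b c - \<Gamma>2 a b c) n (X::nat \<Rightarrow> real) Y =
   (\<lambda>c. conn \<Gamma>1 n X Y c - conn \<Gamma>2 n X Y c)"
  by (rule ext) (simp add: conn_def sum_subtractf algebra_simps)

lemma gc_linear_left:
  "gc G n (\<lambda>c. a * (X::nat \<Rightarrow> real) c + b * X' c) Y = a * gc G n X Y + b * gc G n X' Y"
  by (simp add: gc_def sum.distrib sum_distrib_left algebra_simps)

lemma gc_linear_right:
  "gc G n Y (\<lambda>c. a * (X::nat \<Rightarrow> real) c + b * X' c) = a * gc G n Y X + b * gc G n Y X'"
  by (simp add: gc_def sum.distrib sum_distrib_left algebra_simps)

lemma gc_diff_left:
  "gc G n (\<lambda>c. f c - g c - k c) (v::nat \<Rightarrow> complex) = gc G n f v - gc G n g v - gc G n k v"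
  by (simp add: gc_def sum_subtractf sum.distrib algebra_simps)

definition complexify :: "(nat \<Rightarrow> real) \<Rightarrow> nat \<Rightarrow> complex" where
  "complexify X = (\<lambda>a. complex_of_real (X a))"

lemma complexify_conn: "complexify (conn \<Gamma> n X Y) = conn \<Gamma> n (complexify X) (complexify Y)"
  by (rule ext) (simp add: complexify_def conn_def)

lemma complexify_lie: "complexify (lie C n X Y) = lie C n (complexify X) (complexify Y)"
  by (rule ext) (simp add: complexify_def lie_def)

lemma complexify_endo: "complexify (endo M n X) = endo M n (complexify X)"
  by (rule ext) (simp add: complexify_def endo_def)

lemma complexify_gc: "complex_of_real (gc G n X Y) = gc G n (complexify X) (complexify Y)"
  by (simp add: complexify_def gc_def)

lemma complexify_tors: "complexify (tors C \<Gamma> n X Y) = tors C \<Gamma> n (complexify X) (complexify Y)"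
  unfolding tors_def by (rule ext) (simp add: complexify_def conn_def lie_def)

lemma complexify_inject: "complexify X = complexify Y \<Longrightarrow> X = Y"
  unfolding complexify_def by (rule ext) (metis of_real_eq_iff)

lemma complexify_uminus: "complexify (\<lambda>c. - X c) = (\<lambda>c. - complexify X c)"
  by (rule ext) (simp add: complexify_def)

lemma complexify_add: "complexify (\<lambda>c. X c + Y c) = (\<lambda>c. complexify X c + complexify Y c)"
  by (rule ext) (simp add: complexify_def)

lemma cconj_complexify: "cconj (complexify X) = complexify X"
  by (rule ext) (simp add: cconj_def complexify_def)

lemma cconj_vec_single: "cconj (vec_single a 1) = vec_single a 1"
  by (rule ext) (simp add: cconj_def vec_single_def)

lemma hermitian_metric_nonneg:
  assumes "hermitian_metric J n G"
  shows "gc G n (X::nat \<Rightarrow> real) X \<ge> 0"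
proof (cases "\<exists>a\<in>{1..n}. X a \<noteq> 0")
  case True
  then show ?thesis using assms unfolding hermitian_metric_def by (meson less_imp_le)
next
  case False
  then show ?thesis by (simp add: gc_def)
qed

lemma hermitian_metric_cconj_pos:
  assumes "hermitian_metric J n G" "a0 \<in> {1..n}" "w a0 \<noteq> 0"
  shows "Re (gc G n w (cconj w)) > 0 \<and> Im (gc G n w (cconj w)) = 0"
proof -
  define p where "p = (\<lambda>a. Re (w a))"
  define q where "q = (\<lambda>a. Im (w a))"
  have sym: "gc G n q p = gc G n p q" using assms(1) unfolding hermitian_metric_def by blast
  have re: "Re (gc G n w (cconj w)) = gc G n p p + gc G n q q"
    unfolding gc_def cconj_def p_def q_def
    by (simp add: Re_sum sum.distrib[symmetric] algebra_simps)
  have im: "Im (gc G n w (cconj w)) = gc G n q p - gc G n p q"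
    unfolding gc_def cconj_def p_def q_def
    by (simp add: Im_sum sum_subtractf[symmetric] algebra_simps)
  have "p a0 \<noteq> 0 \<or> q a0 \<noteq> 0" using assms(3) unfolding p_def q_def using complex_eqI by force
  then have "gc G n p p > 0 \<or> gc G n q q > 0"
    using assms(1,2) unfolding hermitian_metric_def by blast
  moreover have "gc G n p p \<ge> 0" "gc G n q q \<ge> 0" using hermitian_metric_nonneg[OF assms(1)] by auto
  ultimately show ?thesis using re im sym by auto
qed

lemma hermitian_metric_sym_entries:
  assumes "hermitian_metric J n G" "a \<in> {1..n}" "b \<in> {1..n}"
  shows "G a b = G b a"
  using assms gc_vec_single[of a n b G "1::real" 1] gc_vec_single[of b n a G "1::real" 1]
  unfolding hermitian_metric_def by auto

lemma frame_metric_hermitian: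
  assumes "hermitian_metric J n G"
  shows "cnj (frame_metric G n F p q) = frame_metric G n F q p"
proof -
  have "cnj (frame_metric G n F p q) = (\<Sum>a=1..n. \<Sum>b=1..n. of_real (G b a) * F q b * cnj (F p a))"
    unfolding frame_metric_def gc_def cconj_def cnj_sum
    by (intro sum.cong refl) (simp add: hermitian_metric_sym_entries[OF assms] mult_ac)
  also have "\<dots> = frame_metric G n F q p"
    unfolding frame_metric_def gc_def cconj_def by (rule sum.swap)
  finally show ?thesis .
qed

section \<open>Uniqueness of the Chern connection\<close>

text \<open>The difference \<open>A\<close> of two Chern connections is a \<open>J\<close>-linear tensor in its second argument
whose antisymmetrisation has vanishing (1,1)-part.  The symmetric tensor
\<open>P(X,Y) = A(X,Y) + J A(JX,Y)\<close> then satisfies both \<open>P(JX,Y) = -J P(X,Y)\<close> and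
\<open>P(JX,Y) = J P(X,Y)\<close>, so \<open>A\<close> is \<open>J\<close>-linear in the first argument as well.\<close>

lemma conn_J_linear_left:
  fixes A :: "nat \<Rightarrow> nat \<Rightarrow> nat \<Rightarrow> real"
  assumes JJ: "\<And>X. endo J n (endo J n X) = (\<lambda>c. if c \<in> {1..n} then - X c else (0::real))"
    and J_right: "\<And>X Y. conn A n (X::nat \<Rightarrow> real) (endo J n Y) = endo J n (conn A n X Y)"
    and tors_11: "\<And>X Y c. conn A n (endo J n (X::nat \<Rightarrow> real)) (endo J n Y) c - conn A n (endo J n Y) (endo J n X) c
                          = - (conn A n X Y c - conn A n Y X c)"
  shows "conn A n (endo J n (X::nat \<Rightarrow> real)) Y = endo J n (conn A n X Y)"
proof -
  define T :: "(nat \<Rightarrow> real) \<Rightarrow> (nat \<Rightarrow> real) \<Rightarrow> nat \<Rightarrow> real" where "T = conn A n"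
  define Jm :: "(nat \<Rightarrow> real) \<Rightarrow> nat \<Rightarrow> real" where "Jm = endo J n"
  have JJT: "Jm (Jm (T X Y)) = (\<lambda>c. - T X Y c)" for X Y
    unfolding Jm_def JJ T_def by (auto simp: fun_eq_iff conn_def)
  have Jneg: "Jm (\<lambda>c. - X c) = (\<lambda>c. - Jm X c)" for X
    unfolding Jm_def using endo_linear[of J n "-1" X 0 X] by simp
  have Jadd: "Jm (\<lambda>c. X c + Y c) = (\<lambda>c. Jm X c + Jm Y c)" for X Y
    unfolding Jm_def using endo_linear[of J n 1 X 1 Y] by simp
  have TJJ: "T (Jm (Jm X)) Y = (\<lambda>c. - T X Y c)" for X Y
  proof -
    have "T (Jm (Jm X)) Y = T (\<lambda>c. - X c) Y"
      unfolding T_def Jm_def JJ by (rule conn_cong) auto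
    then show ?thesis unfolding T_def using conn_linear_left[of A n "-1" X 0 X Y] by simp
  qed
  have j: "T X (Jm Y) = Jm (T X Y)" for X Y
    unfolding T_def Jm_def by (rule J_right)
  define P where "P = (\<lambda>X Y c. T X Y c + Jm (T (Jm X) Y) c)"
  have P_sym: "P X Y = P Y X" for X Y
  proof (rule ext)
    fix c
    have "T (Jm X) (Jm Y) c - T (Jm Y) (Jm X) c = - (T X Y c - T Y X c)"
      unfolding T_def Jm_def by (rule tors_11)
    then show "P X Y c = P Y X c" unfolding P_def j by simp
  qed
  have P_J_left: "P (Jm X) Y = (\<lambda>c. - Jm (P X Y) c)" for X Y
  proof -
    have "Jm (P X Y) = (\<lambda>c. Jm (T X Y) c + Jm (Jm (T (Jm X) Y)) c)"
      unfolding P_def using Jadd by simp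
    then have "Jm (P X Y) = (\<lambda>c. Jm (T X Y) c - T (Jm X) Y c)" unfolding JJT by simp
    moreover have "P (Jm X) Y = (\<lambda>c. T (Jm X) Y c + Jm (\<lambda>c. - T X Y c) c)" unfolding P_def TJJ ..
    ultimately show ?thesis unfolding Jneg by (auto intro!: ext)
  qed
  have P_J_right: "P X (Jm Y) = Jm (P X Y)" for X Y
  proof -
    have "P X (Jm Y) = (\<lambda>c. Jm (T X Y) c + Jm (Jm (T (Jm X) Y)) c)" unfolding P_def j ..
    also have "\<dots> = Jm (\<lambda>c. T X Y c + Jm (T (Jm X) Y) c)" using Jadd by simp
    finally show ?thesis unfolding P_def by simp
  qed
  have P_zero: "P X Y = (\<lambda>c. 0)" for X Y
  proof -
    have "P (Jm X) Y = P Y (Jm X)" by (rule P_sym)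
    also have "\<dots> = Jm (P Y X)" by (rule P_J_right)
    also have "\<dots> = Jm (P X Y)" using P_sym by simp
    finally have "(\<lambda>c. - Jm (P X Y) c) = Jm (P X Y)" unfolding P_J_left .
    then have "Jm (P X Y) = (\<lambda>c. 0)" by (simp add: fun_eq_iff)
    then have "Jm (Jm (P X Y)) = (\<lambda>c. 0)" unfolding Jm_def by (auto simp: endo_def intro!: ext)
    moreover have "P X Y c = 0" if "c \<notin> {1..n}" for c
      unfolding P_def T_def Jm_def conn_outside[OF that] endo_outside[OF that] by simp
    ultimately show ?thesis unfolding Jm_def JJ by (auto simp: fun_eq_iff split: if_splits)
  qed
  have "T X Y = (\<lambda>c. - Jm (T (Jm X) Y) c)"
    using P_zero[of X Y] unfolding P_def by (auto simp: fun_eq_iff eq_neg_iff_add_eq_0)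
  then have "Jm (T X Y) = (\<lambda>c. - Jm (Jm (T (Jm X) Y)) c)" using Jneg by simp
  then have "Jm (T X Y) = T (Jm X) Y" unfolding JJT by simp
  then show ?thesis unfolding T_def Jm_def by simp
qed

text \<open>A tensor that is skew for \<open>g\<close> in the last two arguments and \<open>J\<close>-linear in both arguments
vanishes: \<open>g(J A(X,Y), Z)\<close> equals both \<open>-g(Y, J A(X,Z))\<close> and \<open>g(Y, J A(X,Z))\<close>.\<close>

lemma conn_vanishes_if_skew_and_J_linear:
  fixes A :: "nat \<Rightarrow> nat \<Rightarrow> nat \<Rightarrow> real"
  assumes hm: "hermitian_metric J n G"
    and JJ: "\<And>X. endo J n (endo J n X) = (\<lambda>c. if c \<in> {1..n} then - X c else (0::real))"
    and skew: "\<And>X Y Z. gc G n (conn A n (X::nat \<Rightarrow> real) Y) Z + gc G n Y (conn A n X Z) = 0"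
    and J_right: "\<And>X Y. conn A n (X::nat \<Rightarrow> real) (endo J n Y) = endo J n (conn A n X Y)"
    and J_left: "\<And>X Y. conn A n (endo J n (X::nat \<Rightarrow> real)) Y = endo J n (conn A n X Y)"
  shows "conn A n (X::nat \<Rightarrow> real) Y = (\<lambda>c. 0)"
proof -
  have J_skew: "gc G n (endo J n U) Z = - gc G n U (endo J n Z)" for U Z :: "nat \<Rightarrow> real"
  proof -
    have "gc G n U (endo J n Z) = gc G n (endo J n U) (endo J n (endo J n Z))"
      using hm unfolding hermitian_metric_def by simp
    also have "\<dots> = gc G n (endo J n U) (\<lambda>c. - Z c)"
      unfolding JJ by (rule gc_cong) auto
    also have "\<dots> = - gc G n (endo J n U) Z"
      using gc_linear_right[of G n "endo J n U" "-1" Z 0 Z] by simp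
    finally show ?thesis by simp
  qed
  have orth: "gc G n Y (endo J n (conn A n X Z)) = 0" for X Y Z :: "nat \<Rightarrow> real"
  proof -
    have "gc G n (endo J n (conn A n X Y)) Z = - gc G n Y (endo J n (conn A n X Z))"
      using skew[of "endo J n X" Y Z] unfolding J_left by simp
    moreover have "gc G n (endo J n (conn A n X Y)) Z = gc G n Y (endo J n (conn A n X Z))"
      using J_skew skew[of X Y "endo J n Z"] unfolding J_right by simp
    ultimately show ?thesis by simp
  qed
  have "\<forall>a\<in>{1..n}. endo J n (conn A n X Y) a = 0"
    using orth[of "endo J n (conn A n X Y)" X Y] hm unfolding hermitian_metric_def
    by (metis less_irrefl)
  then have "endo J n (endo J n (conn A n X Y)) = (\<lambda>c. 0)"
    by (auto simp: endo_def intro!: ext)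
  then show ?thesis
    unfolding JJ by (auto simp: fun_eq_iff conn_def split: if_splits)
qed

lemma chern_connection_unique:
  assumes hm: "hermitian_metric J n G"
    and JJ: "\<And>X. endo J n (endo J n X) = (\<lambda>c. if c \<in> {1..n} then - X c else (0::real))"
    and c1: "chern_connection C J G n \<Gamma>1" and c2: "chern_connection C J G n \<Gamma>2"
  shows "\<Gamma>1 = \<Gamma>2"
proof -
  define A where "A = (\<lambda>a b c. \<Gamma>1 a b c - \<Gamma>2 a b c)"
  have A_diff: "conn A n X Y = (\<lambda>c. conn \<Gamma>1 n X Y c - conn \<Gamma>2 n X Y c)" for X Y :: "nat \<Rightarrow> real"
    unfolding A_def conn_diff ..
  have skew: "gc G n (conn A n X Y) Z + gc G n Y (conn A n X Z) = 0" for X Y Z :: "nat \<Rightarrow> real"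
  proof -
    have "gc G n (conn A n X Y) Z = gc G n (conn \<Gamma>1 n X Y) Z - gc G n (conn \<Gamma>2 n X Y) Z"
      unfolding A_diff using gc_linear_left[of G n 1 "conn \<Gamma>1 n X Y" "-1" "conn \<Gamma>2 n X Y" Z] by simp
    moreover have "gc G n Y (conn A n X Z) = gc G n Y (conn \<Gamma>1 n X Z) - gc G n Y (conn \<Gamma>2 n X Z)"
      unfolding A_diff using gc_linear_right[of G n Y 1 "conn \<Gamma>1 n X Z" "-1" "conn \<Gamma>2 n X Z"] by simp
    moreover have "gc G n (conn \<Gamma>1 n X Y) Z + gc G n Y (conn \<Gamma>1 n X Z) = 0"
      "gc G n (conn \<Gamma>2 n X Y) Z + gc G n Y (conn \<Gamma>2 n X Z) = 0"
      using c1 c2 unfolding chern_connection_def by blast+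
    ultimately show ?thesis by simp
  qed
  have J_right: "conn A n X (endo J n Y) = endo J n (conn A n X Y)" for X Y :: "nat \<Rightarrow> real"
  proof -
    have "conn \<Gamma>1 n X (endo J n Y) = endo J n (conn \<Gamma>1 n X Y)"
      "conn \<Gamma>2 n X (endo J n Y) = endo J n (conn \<Gamma>2 n X Y)"
      using c1 c2 unfolding chern_connection_def by blast+
    then show ?thesis
      unfolding A_diff using endo_linear[of J n 1 "conn \<Gamma>1 n X Y" "-1" "conn \<Gamma>2 n X Y"] by simp
  qed
  have tors_11: "conn A n (endo J n X) (endo J n Y) c - conn A n (endo J n Y) (endo J n X) c
                 = - (conn A n X Y c - conn A n Y X c)" for X Y :: "nat \<Rightarrow> real" and c
  proof -
    have "tors C \<Gamma>1 n (endo J n X) (endo J n Y) c = - tors C \<Gamma>1 n X Y c"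
      "tors C \<Gamma>2 n (endo J n X) (endo J n Y) c = - tors C \<Gamma>2 n X Y c"
      using c1 c2 unfolding chern_connection_def by metis+
    then show ?thesis unfolding A_diff tors_def by simp
  qed
  have A_zero: "conn A n X Y = (\<lambda>c. 0)" for X Y :: "nat \<Rightarrow> real"
    using conn_vanishes_if_skew_and_J_linear[OF hm JJ skew J_right
        conn_J_linear_left[OF JJ J_right tors_11]] .
  show ?thesis
  proof (intro ext)
    fix a b c
    show "\<Gamma>1 a b c = \<Gamma>2 a b c"
    proof (cases "a \<in> {1..n} \<and> b \<in> {1..n} \<and> c \<in> {1..n}")
      case False
      then show ?thesis using c1 c2 unfolding chern_connection_def by metis
    next
      case True
      then have "A a b c = 0"
        using conn_vec_single[of a n b c A] A_zero[of "vec_single a 1" "vec_single b 1"] by simp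
      then show ?thesis unfolding A_def by simp
    qed
  qed
qed

section \<open>Positive definite Hermitian 3 \<times> 3 matrices\<close>

definition det3 :: "(nat \<Rightarrow> nat \<Rightarrow> 'a::comm_ring) \<Rightarrow> 'a" where
  "det3 h = h 1 1 * (h 2 2 * h 3 3 - h 2 3 * h 3 2) - h 1 2 * (h 2 1 * h 3 3 - h 2 3 * h 3 1)
          + h 1 3 * (h 2 1 * h 3 2 - h 2 2 * h 3 1)"

definition adj3 :: "(nat \<Rightarrow> nat \<Rightarrow> 'a::comm_ring) \<Rightarrow> nat \<Rightarrow> nat \<Rightarrow> 'a" where
  "adj3 h p q =
     (if (p,q) = (1,1) then h 2 2 * h 3 3 - h 2 3 * h 3 2
      else if (p,q) = (1,2) then h 1 3 * h 3 2 - h 1 2 * h 3 3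
      else if (p,q) = (1,3) then h 1 2 * h 2 3 - h 1 3 * h 2 2
      else if (p,q) = (2,1) then h 2 3 * h 3 1 - h 2 1 * h 3 3
      else if (p,q) = (2,2) then h 1 1 * h 3 3 - h 1 3 * h 3 1
      else if (p,q) = (2,3) then h 1 3 * h 2 1 - h 1 1 * h 2 3
      else if (p,q) = (3,1) then h 2 1 * h 3 2 - h 2 2 * h 3 1
      else if (p,q) = (3,2) then h 1 2 * h 3 1 - h 1 1 * h 3 2
      else if (p,q) = (3,3) then h 1 1 * h 2 2 - h 1 2 * h 2 1 else 0)"

definition inv3 :: "(nat \<Rightarrow> nat \<Rightarrow> 'a::field) \<Rightarrow> nat \<Rightarrow> nat \<Rightarrow> 'a" where
  "inv3 h p q = adj3 h p q / det3 h"

lemma adj3_mult: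
  "p \<in> {1..3} \<Longrightarrow> r \<in> {1..3} \<Longrightarrow>
   adj3 h p 1 * h 1 r + adj3 h p 2 * h 2 r + adj3 h p 3 * h 3 r = (if p = r then det3 h else 0)"
  by (drule atLeastAtMost_1_3_cases)+ (auto simp: adj3_def det3_def algebra_simps)

lemma mult_adj3:
  "p \<in> {1..3} \<Longrightarrow> r \<in> {1..3} \<Longrightarrow>
   h p 1 * adj3 h 1 r + h p 2 * adj3 h 2 r + h p 3 * adj3 h 3 r = (if p = r then det3 h else 0)"
  by (drule atLeastAtMost_1_3_cases)+ (auto simp: adj3_def det3_def algebra_simps)

lemma inv3_mult:
  assumes "det3 h \<noteq> 0" "p \<in> {1..3}" "r \<in> {1..3}"
  shows "inv3 h p 1 * h 1 r + inv3 h p 2 * h 2 r + inv3 h p 3 * h 3 r = (if p = r then 1 else 0)"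
proof -
  have "inv3 h p 1 * h 1 r + inv3 h p 2 * h 2 r + inv3 h p 3 * h 3 r
      = (adj3 h p 1 * h 1 r + adj3 h p 2 * h 2 r + adj3 h p 3 * h 3 r) / det3 h"
    by (simp add: inv3_def add_divide_distrib)
  then show ?thesis using adj3_mult[OF assms(2,3), of h] assms(1) by simp
qed

lemma mult_inv3:
  assumes "det3 h \<noteq> 0" "p \<in> {1..3}" "r \<in> {1..3}"
  shows "h p 1 * inv3 h 1 r + h p 2 * inv3 h 2 r + h p 3 * inv3 h 3 r = (if p = r then 1 else 0)"
proof -
  have "h p 1 * inv3 h 1 r + h p 2 * inv3 h 2 r + h p 3 * inv3 h 3 r
      = (h p 1 * adj3 h 1 r + h p 2 * adj3 h 2 r + h p 3 * adj3 h 3 r) / det3 h"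
    by (simp add: inv3_def add_divide_distrib)
  then show ?thesis using mult_adj3[OF assms(2,3), of h] assms(1) by simp
qed

lemma inv3_hermitian:
  fixes h :: "nat \<Rightarrow> nat \<Rightarrow> complex"
  assumes herm: "\<And>p q. cnj (h p q) = h q p"
  shows "cnj (inv3 h p q) = inv3 h q p"
proof -
  have "cnj (det3 h) = det3 h" unfolding det3_def by (simp add: herm algebra_simps)
  moreover have "cnj (adj3 h p q) = adj3 h q p"
  proof (cases "p \<in> {1..3} \<and> q \<in> {1..3}")
    case True
    then have "p = 1 \<or> p = 2 \<or> p = 3" "q = 1 \<or> q = 2 \<or> q = 3" by auto
    then show ?thesis by (elim disjE; simp add: adj3_def herm algebra_simps)
  next
    case False
    then have "(p \<noteq> 1 \<and> p \<noteq> 2 \<and> p \<noteq> 3) \<or> (q \<noteq> 1 \<and> q \<noteq> 2 \<and> q \<noteq> 3)" by auto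
    then show ?thesis by (elim disjE conjE; simp add: adj3_def)
  qed
  ultimately show ?thesis unfolding inv3_def by simp
qed

definition hform3 :: "(nat \<Rightarrow> nat \<Rightarrow> complex) \<Rightarrow> complex \<Rightarrow> complex \<Rightarrow> complex \<Rightarrow> complex" where
  "hform3 h x1 x2 x3 =
     cnj x1 * (x1 * h 1 1 + x2 * h 2 1 + x3 * h 3 1)
   + cnj x2 * (x1 * h 1 2 + x2 * h 2 2 + x3 * h 3 2)
   + cnj x3 * (x1 * h 1 3 + x2 * h 2 3 + x3 * h 3 3)"

definition pos_def3 :: "(nat \<Rightarrow> nat \<Rightarrow> complex) \<Rightarrow> bool" where
  "pos_def3 h \<longleftrightarrow>
     (\<forall>x1 x2 x3. (x1, x2, x3) \<noteq> (0, 0, 0) \<longrightarrow>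
        Re (hform3 h x1 x2 x3) > 0 \<and> Im (hform3 h x1 x2 x3) = 0)"

lemma pos_def3_diag:
  assumes "pos_def3 h" "p \<in> {1..3}"
  shows "Re (h p p) > 0 \<and> Im (h p p) = 0"
proof -
  have "Re (hform3 h 1 0 0) > 0 \<and> Im (hform3 h 1 0 0) = 0"
    "Re (hform3 h 0 1 0) > 0 \<and> Im (hform3 h 0 1 0) = 0"
    "Re (hform3 h 0 0 1) > 0 \<and> Im (hform3 h 0 0 1) = 0"
    using assms(1) unfolding pos_def3_def by auto
  then show ?thesis using atLeastAtMost_1_3_cases[OF assms(2)] by (auto simp: hform3_def)
qed

lemma pos_def3_left_kernel:
  assumes "pos_def3 h"
    and "x1 * h 1 1 + x2 * h 2 1 + x3 * h 3 1 = 0"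
    and "x1 * h 1 2 + x2 * h 2 2 + x3 * h 3 2 = 0"
    and "x1 * h 1 3 + x2 * h 2 3 + x3 * h 3 3 = 0"
  shows "x1 = 0 \<and> x2 = 0 \<and> x3 = 0"
proof (rule ccontr)
  assume "\<not> ?thesis"
  then have "Re (hform3 h x1 x2 x3) > 0" using assms(1) unfolding pos_def3_def by auto
  moreover have "hform3 h x1 x2 x3 = 0" unfolding hform3_def using assms(2-4) by simp
  ultimately show False by simp
qed

text \<open>If \<open>det3 h = 0\<close>, the rows of the adjugate lie in the left kernel, hence vanish; then
\<open>(0, h\<^sub>3\<^sub>3, -h\<^sub>2\<^sub>3)\<close> lies in the left kernel as well, contradicting \<open>h\<^sub>3\<^sub>3 \<noteq> 0\<close>.\<close>

lemma pos_def3_det3_nonzero: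
  assumes pd: "pos_def3 h"
  shows "det3 h \<noteq> 0"
proof
  assume d: "det3 h = 0"
  have adj_rows: "adj3 h p 1 = 0 \<and> adj3 h p 2 = 0 \<and> adj3 h p 3 = 0" if "p \<in> {1..3}" for p
    using adj3_mult[OF that, of 1 h] adj3_mult[OF that, of 2 h] adj3_mult[OF that, of 3 h] d
    by (intro pos_def3_left_kernel[OF pd]) auto
  have "adj3 h 1 1 = 0" "adj3 h 2 1 = 0" using adj_rows[of 1] adj_rows[of 2] by auto
  then have "(0::complex) = 0 \<and> h 3 3 = 0 \<and> - h 2 3 = 0"
    by (intro pos_def3_left_kernel[OF pd]) (auto simp: adj3_def algebra_simps)
  then show False using pos_def3_diag[OF pd, of 3] by simp
qed

text \<open>The \<open>p\<close>-th row \<open>x\<close> of \<open>h\<^sup>-\<^sup>1\<close> satisfies \<open>hform3 h x = conj (h\<^sup>-\<^sup>1)\<^sub>p\<^sub>p\<close>.\<close>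

lemma pos_def3_inv3_diag:
  assumes pd: "pos_def3 h" and p: "p \<in> {1..3}"
  shows "Re (inv3 h p p) > 0 \<and> Im (inv3 h p p) = 0"
proof -
  have d: "det3 h \<noteq> 0" by (rule pos_def3_det3_nonzero[OF pd])
  have row: "inv3 h p 1 * h 1 r + inv3 h p 2 * h 2 r + inv3 h p 3 * h 3 r = (if p = r then 1 else 0)"
    if "r \<in> {1..3}" for r
    using inv3_mult[OF d p that] .
  have form: "hform3 h (inv3 h p 1) (inv3 h p 2) (inv3 h p 3) = cnj (inv3 h p p)"
    unfolding hform3_def using row[of 1] row[of 2] row[of 3] atLeastAtMost_1_3_cases[OF p]
    by (elim disjE; simp)
  have "(inv3 h p 1, inv3 h p 2, inv3 h p 3) \<noteq> (0, 0, 0)"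
    using row[OF p] by auto
  then have "Re (hform3 h (inv3 h p 1) (inv3 h p 2) (inv3 h p 3)) > 0 \<and>
      Im (hform3 h (inv3 h p 1) (inv3 h p 2) (inv3 h p 3)) = 0"
    using pd unfolding pos_def3_def by blast
  then show ?thesis unfolding form by simp
qed

lemma inv_frame_metric_3:
  assumes d: "det3 (frame_metric G n F) \<noteq> 0"
  shows "inv_frame_metric G n F 3 =
    (\<lambda>p q. if p \<in> {1..3} \<and> q \<in> {1..3} then inv3 (frame_metric G n F) p q else 0)"
    (is "_ = ?H")
proof -
  let ?h = "frame_metric G n F"
  let ?P = "\<lambda>H. (\<forall>p q. p \<notin> {1..3} \<or> q \<notin> {1..3} \<longrightarrow> H p q = 0) \<and>
      (\<forall>p\<in>{1..3}. \<forall>r\<in>{1..3}. (\<Sum>q=1..3. H p q * ?h q r) = (if p = r then 1 else 0))"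
  have "?P ?H"
    unfolding sum_1_to_3 using inv3_mult[OF d] by auto
  moreover have "H' = ?H" if H': "?P H'" for H'
  proof (intro ext)
    fix p q
    show "H' p q = ?H p q"
    proof (cases "p \<in> {1..3} \<and> q \<in> {1..3}")
      case False
      then show ?thesis using H' by auto
    next
      case True
      then have p: "p \<in> {1..3}" and q: "q \<in> {1..3}" by auto
      let ?K = "inv3 ?h"
      have left: "H' p 1 * ?h 1 s + H' p 2 * ?h 2 s + H' p 3 * ?h 3 s = (if p = s then 1 else 0)"
        if "s \<in> {1..3}" for s
        using that p H' unfolding sum_1_to_3 by auto
      have right: "?h r 1 * ?K 1 q + ?h r 2 * ?K 2 q + ?h r 3 * ?K 3 q = (if r = q then 1 else 0)"
        if "r \<in> {1..3}" for r
        using mult_inv3[OF d that q] .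
      have "H' p q = H' p 1 * (?h 1 1 * ?K 1 q + ?h 1 2 * ?K 2 q + ?h 1 3 * ?K 3 q)
          + H' p 2 * (?h 2 1 * ?K 1 q + ?h 2 2 * ?K 2 q + ?h 2 3 * ?K 3 q)
          + H' p 3 * (?h 3 1 * ?K 1 q + ?h 3 2 * ?K 2 q + ?h 3 3 * ?K 3 q)"
        unfolding right[of 1, simplified] right[of 2, simplified] right[of 3, simplified]
        using atLeastAtMost_1_3_cases[OF q] by (elim disjE; simp)
      also have "\<dots> = (H' p 1 * ?h 1 1 + H' p 2 * ?h 2 1 + H' p 3 * ?h 3 1) * ?K 1 q
          + (H' p 1 * ?h 1 2 + H' p 2 * ?h 2 2 + H' p 3 * ?h 3 2) * ?K 2 q
          + (H' p 1 * ?h 1 3 + H' p 2 * ?h 2 3 + H' p 3 * ?h 3 3) * ?K 3 q"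
        by (simp add: algebra_simps)
      also have "\<dots> = ?K p q"
        unfolding left[of 1, simplified] left[of 2, simplified] left[of 3, simplified]
        using atLeastAtMost_1_3_cases[OF p] by (elim disjE; simp)
      finally show ?thesis using p q by simp
    qed
  qed
  ultimately show ?thesis unfolding inv_frame_metric_def by (rule the_equality)
qed

lemma endo_g6_J:
  "endo g6_J 6 (X::nat \<Rightarrow> real) =
   (\<lambda>b. if b = 1 then X 2 else if b = 2 then - X 1 else if b = 3 then - X 4 else if b = 4 then X 3
        else if b = 5 then - X 6 else if b = 6 then X 5 else 0)"
proof (rule ext)
  fix b
  show "endo g6_J 6 X b =
    (if b = 1 then X 2 else if b = 2 then - X 1 else if b = 3 then - X 4 else if b = 4 then X 3
     else if b = 5 then - X 6 else if b = 6 then X 5 else 0)"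
  proof (cases "b \<in> {1..6}")
    case True
    then show ?thesis
      using atLeastAtMost_1_6_cases[OF True] unfolding endo_def sum_1_to_6
      by (elim disjE; simp add: g6_J_def)
  next
    case False
    then have "b \<noteq> 1" "b \<noteq> 2" "b \<noteq> 3" "b \<noteq> 4" "b \<noteq> 5" "b \<noteq> 6" by auto
    then show ?thesis using False unfolding endo_def by simp
  qed
qed

lemma g6_J_squared:
  "endo g6_J 6 (endo g6_J 6 (X::nat \<Rightarrow> real)) = (\<lambda>c. if c \<in> {1..6} then - X c else 0)"
  unfolding endo_g6_J by (rule ext) auto

lemma endo_g6_J_vec_single:
  fixes s :: real
  shows "endo g6_J 6 (vec_single 1 s) = vec_single 2 (-s)" "endo g6_J 6 (vec_single 2 s) = vec_single 1 s"
    "endo g6_J 6 (vec_single 3 s) = vec_single 4 s" "endo g6_J 6 (vec_single 4 s) = vec_single 3 (-s)"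
    "endo g6_J 6 (vec_single 5 s) = vec_single 6 s" "endo g6_J 6 (vec_single 6 s) = vec_single 5 (-s)"
  by (simp_all add: endo_g6_J vec_single_def fun_eq_iff)

text \<open>Symmetry and \<open>J\<close>-invariance of a metric, expressed on its Gram matrix.\<close>

definition g6_gram :: "(nat \<Rightarrow> nat \<Rightarrow> real) \<Rightarrow> bool" where
  "g6_gram G \<longleftrightarrow> G 2 2 = G 1 1 \<and> G 4 4 = G 3 3 \<and> G 6 6 = G 5 5 \<and>
    G 1 2 = 0 \<and> G 2 1 = 0 \<and> G 3 4 = 0 \<and> G 4 3 = 0 \<and> G 5 6 = 0 \<and> G 6 5 = 0 \<and>
    G 2 4 = - G 1 3 \<and> G 2 3 = G 1 4 \<and> G 3 1 = G 1 3 \<and> G 4 1 = G 1 4 \<and> G 4 2 = - G 1 3 \<and>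
    G 3 2 = G 1 4 \<and>
    G 2 6 = - G 1 5 \<and> G 2 5 = G 1 6 \<and> G 5 1 = G 1 5 \<and> G 6 1 = G 1 6 \<and> G 6 2 = - G 1 5 \<and>
    G 5 2 = G 1 6 \<and>
    G 4 6 = G 3 5 \<and> G 4 5 = - G 3 6 \<and> G 5 3 = G 3 5 \<and> G 6 3 = G 3 6 \<and> G 6 4 = G 3 5 \<and>
    G 5 4 = - G 3 6"

lemma hermitian_metric_g6_gram:
  assumes "hermitian_metric g6_J 6 G"
  shows "g6_gram G"
proof -
  have S: "\<And>a b. gc G 6 (vec_single a (1::real)) (vec_single b 1) = gc G 6 (vec_single b 1) (vec_single a 1)"
   and J: "\<And>a b. gc G 6 (endo g6_J 6 (vec_single a (1::real))) (endo g6_J 6 (vec_single b 1)) =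
                 gc G 6 (vec_single a 1) (vec_single b 1)"
    using assms unfolding hermitian_metric_def by blast+
  show ?thesis unfolding g6_gram_def
    using S[of 1 2] S[of 1 3] S[of 1 4] S[of 1 5] S[of 1 6] S[of 2 3] S[of 2 4] S[of 2 5] S[of 2 6]
      S[of 3 4] S[of 3 5] S[of 3 6] S[of 4 5] S[of 4 6] S[of 5 6]
      J[of 1 1] J[of 3 3] J[of 5 5] J[of 1 2] J[of 3 4] J[of 5 6] J[of 1 3] J[of 1 4] J[of 1 5] J[of 1 6]
      J[of 3 5] J[of 3 6]
    unfolding endo_g6_J_vec_single by (simp add: gc_vec_single)
qed

text \<open>\<open>zcomb x\<^sub>1 x\<^sub>2 x\<^sub>3 y\<^sub>1 y\<^sub>2 y\<^sub>3 = \<Sum>\<^sub>j x\<^sub>j Z\<^sub>j + y\<^sub>j conj Z\<^sub>j\<close> for the (1,0)-frame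
\<open>Z\<^sub>1 = e\<^sub>1 + i e\<^sub>2\<close>, \<open>Z\<^sub>2 = e\<^sub>3 - i e\<^sub>4\<close>, \<open>Z\<^sub>3 = e\<^sub>5 - i e\<^sub>6\<close> of \<open>g6_frame\<close>;
\<open>phi\<^sub>j\<close> and \<open>phib\<^sub>j\<close> are the dual coordinates.\<close>

definition zcomb ::
  "complex \<Rightarrow> complex \<Rightarrow> complex \<Rightarrow> complex \<Rightarrow> complex \<Rightarrow> complex \<Rightarrow> nat \<Rightarrow> complex" where
  "zcomb x1 x2 x3 y1 y2 y3 =
     (\<lambda>a. if a = 1 then x1 + y1 else if a = 2 then \<i> * x1 - \<i> * y1
          else if a = 3 then x2 + y2 else if a = 4 then \<i> * y2 - \<i> * x2
          else if a = 5 then x3 + y3 else if a = 6 then \<i> * y3 - \<i> * x3 else 0)"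

definition phi1 :: "(nat \<Rightarrow> complex) \<Rightarrow> complex" where "phi1 u = (u 1 - \<i> * u 2) / 2"
definition phi2 :: "(nat \<Rightarrow> complex) \<Rightarrow> complex" where "phi2 u = (u 3 + \<i> * u 4) / 2"
definition phi3 :: "(nat \<Rightarrow> complex) \<Rightarrow> complex" where "phi3 u = (u 5 + \<i> * u 6) / 2"
definition phib1 :: "(nat \<Rightarrow> complex) \<Rightarrow> complex" where "phib1 u = (u 1 + \<i> * u 2) / 2"
definition phib2 :: "(nat \<Rightarrow> complex) \<Rightarrow> complex" where "phib2 u = (u 3 - \<i> * u 4) / 2"
definition phib3 :: "(nat \<Rightarrow> complex) \<Rightarrow> complex" where "phib3 u = (u 5 - \<i> * u 6) / 2"

lemmas phi_defs = phi1_def phi2_def phi3_def phib1_def phib2_def phib3_def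

lemma phi_zcomb [simp]:
  "phi1 (zcomb x1 x2 x3 y1 y2 y3) = x1" "phi2 (zcomb x1 x2 x3 y1 y2 y3) = x2"
  "phi3 (zcomb x1 x2 x3 y1 y2 y3) = x3" "phib1 (zcomb x1 x2 x3 y1 y2 y3) = y1"
  "phib2 (zcomb x1 x2 x3 y1 y2 y3) = y2" "phib3 (zcomb x1 x2 x3 y1 y2 y3) = y3"
  by (simp_all add: phi_defs zcomb_def field_simps)

abbreviation zexpand :: "(nat \<Rightarrow> complex) \<Rightarrow> nat \<Rightarrow> complex" where
  "zexpand u \<equiv> zcomb (phi1 u) (phi2 u) (phi3 u) (phib1 u) (phib2 u) (phib3 u)"

lemma zexpand_eq: "a \<in> {1..6} \<Longrightarrow> zexpand u a = u a"
  by (drule atLeastAtMost_1_6_cases) (auto simp: phi_defs zcomb_def field_simps)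

lemma zcomb_outside: "c \<notin> {1..6} \<Longrightarrow> zcomb x1 x2 x3 y1 y2 y3 c = 0"
  by (auto simp: zcomb_def)

lemma zcomb_add:
  "(\<lambda>c. zcomb a1 a2 a3 a4 a5 a6 c + zcomb b1 b2 b3 b4 b5 b6 c)
   = zcomb (a1 + b1) (a2 + b2) (a3 + b3) (a4 + b4) (a5 + b5) (a6 + b6)"
  by (rule ext) (simp add: zcomb_def algebra_simps)

lemma zcomb_diff3:
  "(\<lambda>c. zcomb a1 a2 a3 a4 a5 a6 c - zcomb b1 b2 b3 b4 b5 b6 c - zcomb c1 c2 c3 c4 c5 c6 c)
   = zcomb (a1 - b1 - c1) (a2 - b2 - c2) (a3 - b3 - c3) (a4 - b4 - c4) (a5 - b5 - c5) (a6 - b6 - c6)"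
  by (rule ext) (simp add: zcomb_def algebra_simps)

lemma zcomb_uminus:
  "(\<lambda>c. - zcomb a1 a2 a3 a4 a5 a6 c) = zcomb (-a1) (-a2) (-a3) (-a4) (-a5) (-a6)"
  by (rule ext) (simp add: zcomb_def algebra_simps)

lemma cconj_zcomb:
  "cconj (zcomb x1 x2 x3 y1 y2 y3) = zcomb (cnj y1) (cnj y2) (cnj y3) (cnj x1) (cnj x2) (cnj x3)"
  by (rule ext) (simp add: cconj_def zcomb_def)

lemma cnj_phi:
  "cnj (phi1 u) = phib1 (cconj u)" "cnj (phi2 u) = phib2 (cconj u)" "cnj (phi3 u) = phib3 (cconj u)"
  "cnj (phib1 u) = phi1 (cconj u)" "cnj (phib2 u) = phi2 (cconj u)" "cnj (phib3 u) = phi3 (cconj u)"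
  by (simp_all add: phi_defs cconj_def)

lemma phi_linear:
  "phi1 (\<lambda>a. k * w a + f a) = k * phi1 w + phi1 f" "phi2 (\<lambda>a. k * w a + f a) = k * phi2 w + phi2 f"
  "phi3 (\<lambda>a. k * w a + f a) = k * phi3 w + phi3 f" "phib1 (\<lambda>a. k * w a + f a) = k * phib1 w + phib1 f"
  "phib2 (\<lambda>a. k * w a + f a) = k * phib2 w + phib2 f" "phib3 (\<lambda>a. k * w a + f a) = k * phib3 w + phib3 f"
  by (simp_all add: phi_defs field_simps)

lemma g6_frame_zcomb:
  "g6_frame 1 = zcomb 1 0 0 0 0 0" "g6_frame 2 = zcomb 0 1 0 0 0 0" "g6_frame 3 = zcomb 0 0 1 0 0 0"
  by (auto intro!: ext simp: g6_frame_def zcomb_def)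

lemma lie_zcomb:
  "lie g6_bracket 6 (zcomb x1 x2 x3 y1 y2 y3) (zcomb x1' x2' x3' y1' y2' y3') =
   zcomb 0 0 (-2 * (y1 * x2' - x2 * y1')) 0 0 (-2 * (x1 * y2' - y2 * x1'))"
proof (rule ext)
  fix c
  show "lie g6_bracket 6 (zcomb x1 x2 x3 y1 y2 y3) (zcomb x1' x2' x3' y1' y2' y3') c =
        zcomb 0 0 (-2 * (y1 * x2' - x2 * y1')) 0 0 (-2 * (x1 * y2' - y2 * x1')) c"
  proof (cases "c \<in> {1..6}")
    case True
    then show ?thesis
      using atLeastAtMost_1_6_cases[OF True] unfolding lie_def sum_1_to_6
      by (elim disjE; simp add: zcomb_def g6_bracket_def algebra_simps)
  qed (auto simp: lie_def zcomb_def)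
qed

lemma lie_g6_in_frame:
  "lie g6_bracket 6 u v =
   zcomb 0 0 (-2 * (phib1 u * phi2 v - phi2 u * phib1 v)) 0 0 (-2 * (phi1 u * phib2 v - phib2 u * phi1 v))"
proof -
  have "lie g6_bracket 6 u v = lie g6_bracket 6 (zexpand u) (zexpand v)"
    by (rule lie_cong) (simp_all add: zexpand_eq)
  then show ?thesis by (simp add: lie_zcomb)
qed

lemma endo_g6_J_zcomb:
  "endo g6_J 6 (zcomb x1 x2 x3 y1 y2 y3) = zcomb (\<i>*x1) (\<i>*x2) (\<i>*x3) (-\<i>*y1) (-\<i>*y2) (-\<i>*y3)"
proof (rule ext)
  fix c
  show "endo g6_J 6 (zcomb x1 x2 x3 y1 y2 y3) c =
        zcomb (\<i>*x1) (\<i>*x2) (\<i>*x3) (-\<i>*y1) (-\<i>*y2) (-\<i>*y3) c"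
  proof (cases "c \<in> {1..6}")
    case True
    then show ?thesis
      using atLeastAtMost_1_6_cases[OF True] unfolding endo_def sum_1_to_6
      by (elim disjE; simp add: zcomb_def g6_J_def algebra_simps)
  qed (auto simp: endo_def zcomb_def)
qed

lemma phi_endo_g6_J:
  "phi1 (endo g6_J 6 u) = \<i> * phi1 u" "phi2 (endo g6_J 6 u) = \<i> * phi2 u"
  "phi3 (endo g6_J 6 u) = \<i> * phi3 u" "phib1 (endo g6_J 6 u) = - \<i> * phib1 u"
  "phib2 (endo g6_J 6 u) = - \<i> * phib2 u" "phib3 (endo g6_J 6 u) = - \<i> * phib3 u"
proof -
  have "endo g6_J 6 u = endo g6_J 6 (zexpand u)" by (rule endo_cong) (simp add: zexpand_eq)
  then show "phi1 (endo g6_J 6 u) = \<i> * phi1 u" "phi2 (endo g6_J 6 u) = \<i> * phi2 u"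
    "phi3 (endo g6_J 6 u) = \<i> * phi3 u" "phib1 (endo g6_J 6 u) = - \<i> * phib1 u"
    "phib2 (endo g6_J 6 u) = - \<i> * phib2 u" "phib3 (endo g6_J 6 u) = - \<i> * phib3 u"
    by (simp_all add: endo_g6_J_zcomb)
qed

abbreviation hmat :: "(nat \<Rightarrow> nat \<Rightarrow> real) \<Rightarrow> nat \<Rightarrow> nat \<Rightarrow> complex" where
  "hmat G \<equiv> frame_metric G 6 g6_frame"

abbreviation hinv :: "(nat \<Rightarrow> nat \<Rightarrow> real) \<Rightarrow> nat \<Rightarrow> nat \<Rightarrow> complex" where
  "hinv G \<equiv> inv3 (hmat G)"

lemma hmat_eqs:
  assumes "g6_gram G"
  shows "hmat G 1 1 = 2 * G 1 1" "hmat G 2 2 = 2 * G 3 3" "hmat G 3 3 = 2 * G 5 5"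
   "hmat G 1 2 = 2 * G 1 3 + 2 * \<i> * G 1 4" "hmat G 2 1 = 2 * G 1 3 - 2 * \<i> * G 1 4"
   "hmat G 1 3 = 2 * G 1 5 + 2 * \<i> * G 1 6" "hmat G 3 1 = 2 * G 1 5 - 2 * \<i> * G 1 6"
   "hmat G 2 3 = 2 * G 3 5 + 2 * \<i> * G 3 6" "hmat G 3 2 = 2 * G 3 5 - 2 * \<i> * G 3 6"
  using assms unfolding g6_gram_def frame_metric_def gc_def cconj_def g6_frame_def sum_1_to_6
  by (simp_all add: algebra_simps)

lemma gc_zcomb:
  assumes "g6_gram G"
  shows "gc G 6 (zcomb x1 x2 x3 y1 y2 y3) (zcomb x1' x2' x3' y1' y2' y3') =
      x1 * (y1' * hmat G 1 1 + y2' * hmat G 1 2 + y3' * hmat G 1 3)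
    + x2 * (y1' * hmat G 2 1 + y2' * hmat G 2 2 + y3' * hmat G 2 3)
    + x3 * (y1' * hmat G 3 1 + y2' * hmat G 3 2 + y3' * hmat G 3 3)
    + y1 * (x1' * hmat G 1 1 + x2' * hmat G 2 1 + x3' * hmat G 3 1)
    + y2 * (x1' * hmat G 1 2 + x2' * hmat G 2 2 + x3' * hmat G 3 2)
    + y3 * (x1' * hmat G 1 3 + x2' * hmat G 2 3 + x3' * hmat G 3 3)"
  using assms unfolding hmat_eqs[OF assms]
  unfolding g6_gram_def gc_def zcomb_def sum_1_to_6
  by (simp add: algebra_simps)

lemma gc_g6_in_frame:
  assumes "g6_gram G"
  shows "gc G 6 u v =
      phi1 u * (phib1 v * hmat G 1 1 + phib2 v * hmat G 1 2 + phib3 v * hmat G 1 3)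
    + phi2 u * (phib1 v * hmat G 2 1 + phib2 v * hmat G 2 2 + phib3 v * hmat G 2 3)
    + phi3 u * (phib1 v * hmat G 3 1 + phib2 v * hmat G 3 2 + phib3 v * hmat G 3 3)
    + phib1 u * (phi1 v * hmat G 1 1 + phi2 v * hmat G 2 1 + phi3 v * hmat G 3 1)
    + phib2 u * (phi1 v * hmat G 1 2 + phi2 v * hmat G 2 2 + phi3 v * hmat G 3 2)
    + phib3 u * (phi1 v * hmat G 1 3 + phi2 v * hmat G 2 3 + phi3 v * hmat G 3 3)"
proof -
  have "gc G 6 u v = gc G 6 (zexpand u) (zexpand v)" by (rule gc_cong) (simp_all add: zexpand_eq)
  then show ?thesis by (simp add: gc_zcomb[OF assms])
qed

lemma gc_g6_sym:
  assumes "g6_gram G"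
  shows "gc G 6 u v = gc G 6 v (u::nat \<Rightarrow> complex)"
  unfolding gc_g6_in_frame[OF assms] by (simp add: algebra_simps)

lemma hform3_hmat:
  assumes "g6_gram G"
  shows "hform3 (hmat G) x1 x2 x3 = gc G 6 (zcomb x1 x2 x3 0 0 0) (cconj (zcomb x1 x2 x3 0 0 0))"
  unfolding cconj_zcomb gc_zcomb[OF assms] hform3_def by (simp add: algebra_simps)

lemma hmat_pos_def:
  assumes hm: "hermitian_metric g6_J 6 G"
  shows "pos_def3 (hmat G)"
  unfolding pos_def3_def
proof (intro allI impI)
  fix x1 x2 x3 :: complex
  assume "(x1, x2, x3) \<noteq> (0, 0, 0)"
  then have "zcomb x1 x2 x3 0 0 0 1 \<noteq> 0 \<or> zcomb x1 x2 x3 0 0 0 3 \<noteq> 0 \<or> zcomb x1 x2 x3 0 0 0 5 \<noteq> 0"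
    by (simp add: zcomb_def)
  then obtain a0 where "a0 \<in> {1..6}" "zcomb x1 x2 x3 0 0 0 a0 \<noteq> 0"
    using that[of 1] that[of 3] that[of 5] by auto
  then show "Re (hform3 (hmat G) x1 x2 x3) > 0 \<and> Im (hform3 (hmat G) x1 x2 x3) = 0"
    unfolding hform3_hmat[OF hermitian_metric_g6_gram[OF hm]]
    by (rule hermitian_metric_cconj_pos[OF hm])
qed

lemma hmat_hermitian: "hermitian_metric g6_J 6 G \<Longrightarrow> cnj (hmat G p q) = hmat G q p"
  by (rule frame_metric_hermitian)

lemma hinv_hermitian: "hermitian_metric g6_J 6 G \<Longrightarrow> cnj (hinv G p q) = hinv G q p"
  by (rule inv3_hermitian) (rule hmat_hermitian)

lemma hmat_det3_nonzero: "hermitian_metric g6_J 6 G \<Longrightarrow> det3 (hmat G) \<noteq> 0"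
  by (rule pos_def3_det3_nonzero) (rule hmat_pos_def)

lemma inv_frame_metric_g6:
  "hermitian_metric g6_J 6 G \<Longrightarrow>
   inv_frame_metric G 6 g6_frame 3 = (\<lambda>p q. if p \<in> {1..3} \<and> q \<in> {1..3} then hinv G p q else 0)"
  by (rule inv_frame_metric_3) (rule hmat_det3_nonzero)

section \<open>The Chern connection\<close>

text \<open>By \<open>gc_g6_in_frame\<close>, \<open>gZ3bar G v = g(v, conj Z\<^sub>3)\<close> and \<open>gZ3 G v = g(v, Z\<^sub>3)\<close>.\<close>

definition gZ3bar :: "(nat \<Rightarrow> nat \<Rightarrow> real) \<Rightarrow> (nat \<Rightarrow> complex) \<Rightarrow> complex" where
  "gZ3bar G v = phi1 v * hmat G 1 3 + phi2 v * hmat G 2 3 + phi3 v * hmat G 3 3"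

definition gZ3 :: "(nat \<Rightarrow> nat \<Rightarrow> real) \<Rightarrow> (nat \<Rightarrow> complex) \<Rightarrow> complex" where
  "gZ3 G v = phib1 v * hmat G 3 1 + phib2 v * hmat G 3 2 + phib3 v * hmat G 3 3"

lemma gZ3bar_zcomb: "gZ3bar G (zcomb x1 x2 x3 y1 y2 y3) = x1 * hmat G 1 3 + x2 * hmat G 2 3 + x3 * hmat G 3 3"
  by (simp add: gZ3bar_def)

lemma gZ3_zcomb: "gZ3 G (zcomb x1 x2 x3 y1 y2 y3) = y1 * hmat G 3 1 + y2 * hmat G 3 2 + y3 * hmat G 3 3"
  by (simp add: gZ3_def)

lemma cnj_gZ3bar: "hermitian_metric g6_J 6 G \<Longrightarrow> cnj (gZ3bar G u) = gZ3 G (cconj u)"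
  unfolding gZ3bar_def gZ3_def by (simp add: cnj_phi hmat_hermitian)

lemma cnj_gZ3: "hermitian_metric g6_J 6 G \<Longrightarrow> cnj (gZ3 G u) = gZ3bar G (cconj u)"
  unfolding gZ3bar_def gZ3_def by (simp add: cnj_phi hmat_hermitian)

text \<open>Only \<open>\<nabla>\<^bsub>Z\<^sub>1\<^esub>\<close> and \<open>\<nabla>\<^bsub>conj Z\<^sub>1\<^esub>\<close> are nonzero.
\<open>\<nabla>\<^bsub>conj Z\<^sub>1\<^esub> Z\<^sub>k = [conj Z\<^sub>1, Z\<^sub>k]\<^sup>1\<^sup>,\<^sup>0 = -2 \<delta>\<^sub>k\<^sub>2 Z\<^sub>3\<close>, and \<open>\<nabla>\<^bsub>Z\<^sub>1\<^esub> Z\<^sub>k\<close> is then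
forced by metric compatibility: \<open>g(\<nabla>\<^bsub>Z\<^sub>1\<^esub> Z\<^sub>k, conj Z\<^sub>l) = 2 \<delta>\<^sub>l\<^sub>2 h\<^sub>k\<^sub>3\<close>.  On the
\<open>conj Z\<^sub>k\<close> the connection acts by the conjugate formulas.\<close>

definition chern_nabla :: "(nat \<Rightarrow> nat \<Rightarrow> real) \<Rightarrow> (nat \<Rightarrow> complex) \<Rightarrow> (nat \<Rightarrow> complex) \<Rightarrow> nat \<Rightarrow> complex" where
  "chern_nabla G u v =
     zcomb (2 * phi1 u * gZ3bar G v * hinv G 2 1) (2 * phi1 u * gZ3bar G v * hinv G 2 2)
       (2 * phi1 u * gZ3bar G v * hinv G 2 3 - 2 * phib1 u * phi2 v)
       (2 * phib1 u * gZ3 G v * hinv G 1 2) (2 * phib1 u * gZ3 G v * hinv G 2 2)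
       (2 * phib1 u * gZ3 G v * hinv G 3 2 - 2 * phi1 u * phib2 v)"

definition chern_gamma :: "(nat \<Rightarrow> nat \<Rightarrow> real) \<Rightarrow> nat \<Rightarrow> nat \<Rightarrow> nat \<Rightarrow> real" where
  "chern_gamma G a b c =
     (if a \<in> {1..6} \<and> b \<in> {1..6} \<and> c \<in> {1..6}
      then Re (chern_nabla G (vec_single a 1) (vec_single b 1) c) else 0)"

lemma phi_chern_nabla:
  "phi1 (chern_nabla G u v) = 2 * phi1 u * gZ3bar G v * hinv G 2 1"
  "phi2 (chern_nabla G u v) = 2 * phi1 u * gZ3bar G v * hinv G 2 2"
  "phi3 (chern_nabla G u v) = 2 * phi1 u * gZ3bar G v * hinv G 2 3 - 2 * phib1 u * phi2 v"
  "phib1 (chern_nabla G u v) = 2 * phib1 u * gZ3 G v * hinv G 1 2"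
  "phib2 (chern_nabla G u v) = 2 * phib1 u * gZ3 G v * hinv G 2 2"
  "phib3 (chern_nabla G u v) = 2 * phib1 u * gZ3 G v * hinv G 3 2 - 2 * phi1 u * phib2 v"
  by (simp_all add: chern_nabla_def)

lemma cnj_chern_nabla:
  assumes hm: "hermitian_metric g6_J 6 G"
  shows "cnj (chern_nabla G u v c) = chern_nabla G (cconj u) (cconj v) c"
proof -
  have "cconj (chern_nabla G u v) = chern_nabla G (cconj u) (cconj v)"
    unfolding chern_nabla_def cconj_zcomb
    by (simp add: cnj_phi cnj_gZ3bar[OF hm] cnj_gZ3[OF hm] hinv_hermitian[OF hm])
  then show ?thesis by (metis cconj_def)
qed

lemma chern_nabla_vec_single_real:
  assumes "hermitian_metric g6_J 6 G"
  shows "complex_of_real (Re (chern_nabla G (vec_single a 1) (vec_single b 1) c)) =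
         chern_nabla G (vec_single a 1) (vec_single b 1) c"
  using cnj_chern_nabla[OF assms, of "vec_single a 1" "vec_single b 1" c]
  unfolding cconj_vec_single by (simp add: Reals_cnj_iff)

lemma chern_nabla_bilinear:
  assumes "c \<in> {1..6}"
  shows "(\<Sum>a=1..6. \<Sum>b=1..6. chern_nabla G (vec_single a 1) (vec_single b 1) c * u a * v b) =
         chern_nabla G u v c"
  using atLeastAtMost_1_6_cases[OF assms]
  unfolding sum_1_to_6 chern_nabla_def gZ3bar_def gZ3_def zcomb_def vec_single_def phi_defs
  by (elim disjE; simp add: field_simps)

lemma conn_chern_gamma:
  assumes hm: "hermitian_metric g6_J 6 G"
  shows "conn (chern_gamma G) 6 u v = chern_nabla G u v"
proof (rule ext)
  fix c
  show "conn (chern_gamma G) 6 u v c = chern_nabla G u v c"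
  proof (cases "c \<in> {1..6}")
    case True
    have "conn (chern_gamma G) 6 u v c =
          (\<Sum>a=1..6. \<Sum>b=1..6. chern_nabla G (vec_single a 1) (vec_single b 1) c * u a * v b)"
      unfolding conn_def using True
      by (auto simp: chern_gamma_def chern_nabla_vec_single_real[OF hm] intro!: sum.cong)
    also have "\<dots> = chern_nabla G u v c" using chern_nabla_bilinear[OF True] .
    finally show ?thesis .
  next
    case False
    then show ?thesis by (simp add: conn_outside chern_nabla_def zcomb_outside)
  qed
qed

lemma hinv_hmat_relations:
  assumes hm: "hermitian_metric g6_J 6 G"
  shows "hinv G 2 1 * hmat G 1 1 + hinv G 2 2 * hmat G 2 1 + hinv G 2 3 * hmat G 3 1 = 0"
    "hinv G 2 1 * hmat G 1 2 + hinv G 2 2 * hmat G 2 2 + hinv G 2 3 * hmat G 3 2 = 1"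
    "hinv G 2 1 * hmat G 1 3 + hinv G 2 2 * hmat G 2 3 + hinv G 2 3 * hmat G 3 3 = 0"
    "hmat G 1 1 * hinv G 1 2 + hmat G 1 2 * hinv G 2 2 + hmat G 1 3 * hinv G 3 2 = 0"
    "hmat G 2 1 * hinv G 1 2 + hmat G 2 2 * hinv G 2 2 + hmat G 2 3 * hinv G 3 2 = 1"
    "hmat G 3 1 * hinv G 1 2 + hmat G 3 2 * hinv G 2 2 + hmat G 3 3 * hinv G 3 2 = 0"
  using inv3_mult[OF hmat_det3_nonzero[OF hm], of 2 1] inv3_mult[OF hmat_det3_nonzero[OF hm], of 2 2]
    inv3_mult[OF hmat_det3_nonzero[OF hm], of 2 3] mult_inv3[OF hmat_det3_nonzero[OF hm], of 1 2]
    mult_inv3[OF hmat_det3_nonzero[OF hm], of 2 2] mult_inv3[OF hmat_det3_nonzero[OF hm], of 3 2]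
  by simp_all

lemma gZ3bar_chern_nabla:
  assumes hm: "hermitian_metric g6_J 6 G"
  shows "gZ3bar G (chern_nabla G u v) = -2 * phib1 u * phi2 v * hmat G 3 3"
proof -
  have "gZ3bar G (chern_nabla G u v) =
      2 * phi1 u * gZ3bar G v * (hinv G 2 1 * hmat G 1 3 + hinv G 2 2 * hmat G 2 3 + hinv G 2 3 * hmat G 3 3)
      - 2 * phib1 u * phi2 v * hmat G 3 3"
    unfolding chern_nabla_def gZ3bar_zcomb by (simp add: algebra_simps)
  then show ?thesis using hinv_hmat_relations(3)[OF hm] by simp
qed

lemma gZ3_chern_nabla:
  assumes hm: "hermitian_metric g6_J 6 G"
  shows "gZ3 G (chern_nabla G u v) = -2 * phi1 u * phib2 v * hmat G 3 3"
proof -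
  have "gZ3 G (chern_nabla G u v) =
      2 * phib1 u * gZ3 G v * (hmat G 3 1 * hinv G 1 2 + hmat G 3 2 * hinv G 2 2 + hmat G 3 3 * hinv G 3 2)
      - 2 * phi1 u * phib2 v * hmat G 3 3"
    unfolding chern_nabla_def gZ3_zcomb by (simp add: algebra_simps)
  then show ?thesis using hinv_hmat_relations(6)[OF hm] by simp
qed

lemma gc_chern_nabla:
  assumes hm: "hermitian_metric g6_J 6 G"
  shows "gc G 6 (chern_nabla G u v) w =
      2 * phi1 u * gZ3bar G v * phib2 w + 2 * phib1 u * gZ3 G v * phi2 w
    - 2 * phib1 u * phi2 v * gZ3 G w - 2 * phi1 u * phib2 v * gZ3bar G w"
proof -
  note gram = hermitian_metric_g6_gram[OF hm]
  have "gc G 6 (chern_nabla G u v) w =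
     2 * phi1 u * gZ3bar G v *
       (phib1 w * (hinv G 2 1 * hmat G 1 1 + hinv G 2 2 * hmat G 2 1 + hinv G 2 3 * hmat G 3 1)
      + phib2 w * (hinv G 2 1 * hmat G 1 2 + hinv G 2 2 * hmat G 2 2 + hinv G 2 3 * hmat G 3 2)
      + phib3 w * (hinv G 2 1 * hmat G 1 3 + hinv G 2 2 * hmat G 2 3 + hinv G 2 3 * hmat G 3 3))
   + 2 * phib1 u * gZ3 G v *
       (phi1 w * (hmat G 1 1 * hinv G 1 2 + hmat G 1 2 * hinv G 2 2 + hmat G 1 3 * hinv G 3 2)
      + phi2 w * (hmat G 2 1 * hinv G 1 2 + hmat G 2 2 * hinv G 2 2 + hmat G 2 3 * hinv G 3 2)
      + phi3 w * (hmat G 3 1 * hinv G 1 2 + hmat G 3 2 * hinv G 2 2 + hmat G 3 3 * hinv G 3 2))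
   - 2 * phib1 u * phi2 v * gZ3 G w - 2 * phi1 u * phib2 v * gZ3bar G w"
    unfolding gc_g6_in_frame[OF gram] chern_nabla_def phi_zcomb gZ3bar_def[of G w] gZ3_def[of G w]
    by (simp add: algebra_simps)
  then show ?thesis unfolding hinv_hmat_relations[OF hm] by simp
qed

lemma chern_nabla_metric:
  assumes hm: "hermitian_metric g6_J 6 G"
  shows "gc G 6 (chern_nabla G u v) w + gc G 6 v (chern_nabla G u w) = 0"
  unfolding gc_g6_sym[OF hermitian_metric_g6_gram[OF hm], of v] gc_chern_nabla[OF hm]
  by (simp add: algebra_simps)

lemma chern_nabla_J: "chern_nabla G u (endo g6_J 6 v) = endo g6_J 6 (chern_nabla G u v)"
  unfolding chern_nabla_def endo_g6_J_zcomb phi_zcomb gZ3bar_def gZ3_def phi_endo_g6_J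
  by (simp add: algebra_simps)

lemma tors_chern_gamma:
  assumes hm: "hermitian_metric g6_J 6 G"
  shows "tors g6_bracket (chern_gamma G) 6 u v =
    (\<lambda>c. chern_nabla G u v c - chern_nabla G v u c - lie g6_bracket 6 u v c)"
  unfolding tors_def conn_chern_gamma[OF hm] ..

lemma tors_chern_gamma_J:
  assumes hm: "hermitian_metric g6_J 6 G"
  shows "tors g6_bracket (chern_gamma G) 6 (endo g6_J 6 u) (endo g6_J 6 v) =
         (\<lambda>c. - tors g6_bracket (chern_gamma G) 6 u (v::nat \<Rightarrow> complex) c)"
  unfolding tors_chern_gamma[OF hm] chern_nabla_def lie_g6_in_frame zcomb_diff3 zcomb_uminus
    phi_endo_g6_J gZ3bar_def gZ3_def
  by (simp add: algebra_simps)

lemma chern_connection_chern_gamma: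
  assumes hm: "hermitian_metric g6_J 6 G"
  shows "chern_connection g6_bracket g6_J G 6 (chern_gamma G)"
proof -
  have metric: "gc G 6 (conn (chern_gamma G) 6 X Y) Z + gc G 6 Y (conn (chern_gamma G) 6 X Z) = 0"
    for X Y Z :: "nat \<Rightarrow> real"
  proof -
    have "complex_of_real (gc G 6 (conn (chern_gamma G) 6 X Y) Z + gc G 6 Y (conn (chern_gamma G) 6 X Z))
        = gc G 6 (chern_nabla G (complexify X) (complexify Y)) (complexify Z)
          + gc G 6 (complexify Y) (chern_nabla G (complexify X) (complexify Z))"
      by (simp only: of_real_add complexify_gc complexify_conn conn_chern_gamma[OF hm])
    also have "\<dots> = 0" by (rule chern_nabla_metric[OF hm])
    finally show ?thesis by (simp only: of_real_eq_0_iff)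
  qed
  have J_parallel: "conn (chern_gamma G) 6 X (endo g6_J 6 Y) = endo g6_J 6 (conn (chern_gamma G) 6 X Y)"
    for X Y :: "nat \<Rightarrow> real"
    by (rule complexify_inject)
      (simp add: complexify_conn complexify_endo conn_chern_gamma[OF hm] chern_nabla_J)
  have tors_11: "tors g6_bracket (chern_gamma G) 6 (endo g6_J 6 X) (endo g6_J 6 Y) =
                 (\<lambda>c. - tors g6_bracket (chern_gamma G) 6 X Y c)"
    for X Y :: "nat \<Rightarrow> real"
    by (rule complexify_inject)
      (simp add: complexify_tors complexify_endo complexify_uminus tors_chern_gamma_J[OF hm])
  show ?thesis
    unfolding chern_connection_def using metric J_parallel tors_11 by (auto simp: chern_gamma_def)
qed

lemma chern_christoffel_g6:
  assumes hm: "hermitian_metric g6_J 6 G"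
  shows "chern_christoffel g6_bracket g6_J G 6 = chern_gamma G"
  unfolding chern_christoffel_def
proof (rule the_equality)
  show "chern_connection g6_bracket g6_J G 6 (chern_gamma G)"
    by (rule chern_connection_chern_gamma[OF hm])
  fix \<Gamma> assume "chern_connection g6_bracket g6_J G 6 \<Gamma>"
  then show "\<Gamma> = chern_gamma G"
    using chern_connection_unique[OF hm g6_J_squared _ chern_connection_chern_gamma[OF hm]] by blast
qed

section \<open>Curvature and torsion terms\<close>

lemma curv_chern_gamma:
  assumes hm: "hermitian_metric g6_J 6 G"
  shows "curv g6_bracket (chern_gamma G) 6 u v w =
    (\<lambda>c. chern_nabla G u (chern_nabla G v w) c - chern_nabla G v (chern_nabla G u w) c
         - chern_nabla G (lie g6_bracket 6 u v) w c)"
  unfolding curv_def conn_chern_gamma[OF hm] ..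

lemma chern_S_g6:
  assumes hm: "hermitian_metric g6_J 6 G"
  shows "chern_S g6_bracket g6_J G 6 g6_frame 3 u v =
     4 * hinv G 1 1 * (hinv G 2 2 * (gZ3bar G u * gZ3 G v - gZ3 G u * gZ3bar G v)
                       + hmat G 3 3 * (phib2 u * phi2 v - phi2 u * phib2 v))"
  unfolding chern_S_def Let_def chern_christoffel_g6[OF hm] inv_frame_metric_g6[OF hm] sum_1_to_3
  unfolding curv_chern_gamma[OF hm] gc_diff_left gc_chern_nabla[OF hm] gZ3bar_chern_nabla[OF hm]
    gZ3_chern_nabla[OF hm] phi_chern_nabla
  unfolding g6_frame_zcomb cconj_zcomb lie_g6_in_frame
  by (simp add: algebra_simps)

lemma gc_tors_10:
  assumes hm: "hermitian_metric g6_J 6 G"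
  shows "gc G 6 (tors g6_bracket (chern_gamma G) 6 (zcomb a1 a2 a3 0 0 0) (zcomb b1 b2 b3 0 0 0)) v
     = 2 * (a1 * gZ3bar G (zcomb b1 b2 b3 0 0 0) - b1 * gZ3bar G (zcomb a1 a2 a3 0 0 0)) * phib2 v"
  unfolding tors_chern_gamma[OF hm] gc_diff_left gc_chern_nabla[OF hm]
  unfolding lie_g6_in_frame gc_g6_in_frame[OF hermitian_metric_g6_gram[OF hm]] phi_zcomb
  by (simp add: algebra_simps)

lemma gc_tors_01:
  assumes hm: "hermitian_metric g6_J 6 G"
  shows "gc G 6 (tors g6_bracket (chern_gamma G) 6 (zcomb 0 0 0 a1 a2 a3) (zcomb 0 0 0 b1 b2 b3)) v
     = 2 * (a1 * gZ3 G (zcomb 0 0 0 b1 b2 b3) - b1 * gZ3 G (zcomb 0 0 0 a1 a2 a3)) * phi2 v"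
  unfolding tors_chern_gamma[OF hm] gc_diff_left gc_chern_nabla[OF hm]
  unfolding lie_g6_in_frame gc_g6_in_frame[OF hermitian_metric_g6_gram[OF hm]] phi_zcomb
  by (simp add: algebra_simps)

lemma chern_Q2_g6:
  assumes hm: "hermitian_metric g6_J 6 G"
  shows "chern_Q2 g6_bracket g6_J G 6 g6_frame 3 u v = 8 * hinv G 1 1 * hmat G 3 3 * phi2 u * phib2 v"
proof -
  have d: "det3 (hmat G) \<noteq> 0" by (rule hmat_det3_nonzero[OF hm])
  have r13: "hinv G 1 1 * hmat G 1 3 + hinv G 1 2 * hmat G 2 3 + hinv G 1 3 * hmat G 3 3 = 0"
    using inv3_mult[OF d, of 1 3] by simp
  have r23: "hinv G 2 1 * hmat G 1 3 + hinv G 2 2 * hmat G 2 3 + hinv G 2 3 * hmat G 3 3 = 0"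
    using inv3_mult[OF d, of 2 3] by simp
  have r33: "hinv G 3 1 * hmat G 1 3 + hinv G 3 2 * hmat G 2 3 + hinv G 3 3 * hmat G 3 3 = 1"
    using inv3_mult[OF d, of 3 3] by simp
  have "chern_Q2 g6_bracket g6_J G 6 g6_frame 3 u v = 4 * phi2 u * phib2 v *
     (2 * hinv G 1 1 *
        (hmat G 3 1 * (hinv G 1 1 * hmat G 1 3 + hinv G 1 2 * hmat G 2 3 + hinv G 1 3 * hmat G 3 3)
       + hmat G 3 2 * (hinv G 2 1 * hmat G 1 3 + hinv G 2 2 * hmat G 2 3 + hinv G 2 3 * hmat G 3 3)
       + hmat G 3 3 * (hinv G 3 1 * hmat G 1 3 + hinv G 3 2 * hmat G 2 3 + hinv G 3 3 * hmat G 3 3))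
      - 2 * (hinv G 1 1 * hmat G 1 3 + hinv G 1 2 * hmat G 2 3 + hinv G 1 3 * hmat G 3 3)
          * (hinv G 1 1 * hmat G 3 1 + hinv G 2 1 * hmat G 3 2 + hinv G 3 1 * hmat G 3 3))"
    unfolding chern_Q2_def Let_def chern_christoffel_g6[OF hm] inv_frame_metric_g6[OF hm] sum_1_to_3
    unfolding g6_frame_zcomb cconj_zcomb complex_cnj_one complex_cnj_zero gc_tors_10[OF hm]
      gc_tors_01[OF hm] gZ3bar_zcomb gZ3_zcomb
    by (simp add: algebra_simps)
  then show ?thesis unfolding r13 r23 r33 by simp
qed

lemma chern_Theta_g6:
  assumes hm: "hermitian_metric g6_J 6 G"
  shows "chern_Theta g6_bracket g6_J G 6 g6_frame 3 u v =
     4 * hinv G 1 1 * (hinv G 2 2 * (gZ3bar G u * gZ3 G v - gZ3 G u * gZ3bar G v)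
                       + hmat G 3 3 * phib2 u * phi2 v)"
  unfolding chern_Theta_def chern_S_g6[OF hm] chern_Q2_g6[OF hm] by (simp add: algebra_simps)

lemma phi_part10:
  "phi1 (part10 g6_J 6 X) = phi1 (complexify X)" "phi2 (part10 g6_J 6 X) = phi2 (complexify X)"
  "phi3 (part10 g6_J 6 X) = phi3 (complexify X)"
  "phib1 (part10 g6_J 6 X) = 0" "phib2 (part10 g6_J 6 X) = 0" "phib3 (part10 g6_J 6 X) = 0"
  by (simp_all add: phi_defs part10_def endo_g6_J complexify_def field_simps)

lemma phi_cconj_part10:
  "phi1 (cconj (part10 g6_J 6 X)) = 0" "phi2 (cconj (part10 g6_J 6 X)) = 0"
  "phi3 (cconj (part10 g6_J 6 X)) = 0"
  "phib1 (cconj (part10 g6_J 6 X)) = phib1 (complexify X)"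
  "phib2 (cconj (part10 g6_J 6 X)) = phib2 (complexify X)"
  "phib3 (cconj (part10 g6_J 6 X)) = phib3 (complexify X)"
proof -
  have e: "phi1 (cconj u) = cnj (phib1 u)" "phi2 (cconj u) = cnj (phib2 u)" "phi3 (cconj u) = cnj (phib3 u)"
     "phib1 (cconj u) = cnj (phi1 u)" "phib2 (cconj u) = cnj (phi2 u)" "phib3 (cconj u) = cnj (phi3 u)"
    for u
    by (simp_all add: phi_defs cconj_def)
  show "phi1 (cconj (part10 g6_J 6 X)) = 0" "phi2 (cconj (part10 g6_J 6 X)) = 0"
    "phi3 (cconj (part10 g6_J 6 X)) = 0"
    unfolding e phi_part10 by simp_all
  show "phib1 (cconj (part10 g6_J 6 X)) = phib1 (complexify X)"
    "phib2 (cconj (part10 g6_J 6 X)) = phib2 (complexify X)"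
    "phib3 (cconj (part10 g6_J 6 X)) = phib3 (complexify X)"
    unfolding e phi_part10 cnj_phi cconj_complexify by simp_all
qed

lemma Theta_form_g6:
  assumes hm: "hermitian_metric g6_J 6 G"
  shows "Theta_form g6_bracket g6_J G 6 g6_frame 3 X Y =
     4 * hinv G 1 1 * hinv G 2 2 *
       (gZ3bar G (complexify X) * gZ3 G (complexify Y) + gZ3bar G (complexify Y) * gZ3 G (complexify X))"
  unfolding Theta_form_def chern_Theta_g6[OF hm] gZ3bar_def gZ3_def phi_part10 phi_cconj_part10
  by (simp add: algebra_simps)

section \<open>The soliton\<close>

definition theta_coeff :: "(nat \<Rightarrow> nat \<Rightarrow> real) \<Rightarrow> real" where
  "theta_coeff G = 4 * Re (hinv G 1 1) * Re (hinv G 2 2)"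

definition soliton_const :: "(nat \<Rightarrow> nat \<Rightarrow> real) \<Rightarrow> real" where
  "soliton_const G = - theta_coeff G * Re (hmat G 3 3)"

text \<open>\<open>soliton_der G u = \<Theta>\<^sub>g u - c u\<close>, where
\<open>\<Theta>\<^sub>g u = \<alpha> (g(u, conj Z\<^sub>3) Z\<^sub>3 + g(u, Z\<^sub>3) conj Z\<^sub>3)\<close> by \<open>Theta_form_g6\<close>.\<close>

definition soliton_der :: "(nat \<Rightarrow> nat \<Rightarrow> real) \<Rightarrow> (nat \<Rightarrow> complex) \<Rightarrow> nat \<Rightarrow> complex" where
  "soliton_der G u =
     zcomb (- of_real (soliton_const G) * phi1 u) (- of_real (soliton_const G) * phi2 u)
       (- of_real (soliton_const G) * phi3 u + of_real (theta_coeff G) * gZ3bar G u)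
       (- of_real (soliton_const G) * phib1 u) (- of_real (soliton_const G) * phib2 u)
       (- of_real (soliton_const G) * phib3 u + of_real (theta_coeff G) * gZ3 G u)"

definition soliton_der_mat :: "(nat \<Rightarrow> nat \<Rightarrow> real) \<Rightarrow> nat \<Rightarrow> nat \<Rightarrow> real" where
  "soliton_der_mat G a b = Re (soliton_der G (vec_single a 1) b)"

lemma theta_coeff_complex:
  assumes hm: "hermitian_metric g6_J 6 G"
  shows "complex_of_real (theta_coeff G) = 4 * hinv G 1 1 * hinv G 2 2"
proof -
  have "complex_of_real (Re (hinv G 1 1)) = hinv G 1 1" "complex_of_real (Re (hinv G 2 2)) = hinv G 2 2"
    using pos_def3_inv3_diag[OF hmat_pos_def[OF hm], of 1] pos_def3_inv3_diag[OF hmat_pos_def[OF hm], of 2]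
    by (simp_all add: complex_eq_iff)
  then show ?thesis unfolding theta_coeff_def by simp
qed

lemma soliton_const_complex:
  assumes hm: "hermitian_metric g6_J 6 G"
  shows "complex_of_real (soliton_const G) = - complex_of_real (theta_coeff G) * hmat G 3 3"
proof -
  have "complex_of_real (Re (hmat G 3 3)) = hmat G 3 3"
    using pos_def3_diag[OF hmat_pos_def[OF hm], of 3] by (simp add: complex_eq_iff)
  then show ?thesis unfolding soliton_const_def by simp
qed

lemma soliton_const_neg:
  assumes hm: "hermitian_metric g6_J 6 G"
  shows "soliton_const G < 0"
proof -
  have "Re (hinv G 1 1) > 0" "Re (hinv G 2 2) > 0" "Re (hmat G 3 3) > 0"
    using pos_def3_inv3_diag[OF hmat_pos_def[OF hm], of 1] pos_def3_inv3_diag[OF hmat_pos_def[OF hm], of 2]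
      pos_def3_diag[OF hmat_pos_def[OF hm], of 3]
    by simp_all
  then show ?thesis unfolding soliton_const_def theta_coeff_def by simp
qed

lemma soliton_der_vec_single_real:
  assumes hm: "hermitian_metric g6_J 6 G"
  shows "complex_of_real (Re (soliton_der G (vec_single a 1) b)) = soliton_der G (vec_single a 1) b"
proof -
  have "cconj (soliton_der G u) = soliton_der G (cconj u)" for u
    unfolding soliton_der_def cconj_zcomb by (simp add: cnj_phi cnj_gZ3bar[OF hm] cnj_gZ3[OF hm])
  then have "cnj (soliton_der G (vec_single a 1) b) = soliton_der G (vec_single a 1) b"
    using cconj_vec_single[of a] by (metis cconj_def)
  then show ?thesis by (simp add: Reals_cnj_iff)
qed

lemma soliton_der_linear:
  assumes "c \<in> {1..6}"
  shows "(\<Sum>a=1..6. soliton_der G (vec_single a 1) c * u a) = soliton_der G u c"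
  using atLeastAtMost_1_6_cases[OF assms]
  unfolding sum_1_to_6 soliton_der_def gZ3bar_def gZ3_def zcomb_def vec_single_def phi_defs
  by (elim disjE; simp add: field_simps)

lemma endo_soliton_der_mat:
  assumes hm: "hermitian_metric g6_J 6 G"
  shows "endo (soliton_der_mat G) 6 u = soliton_der G u"
proof (rule ext)
  fix c
  show "endo (soliton_der_mat G) 6 u c = soliton_der G u c"
  proof (cases "c \<in> {1..6}")
    case True
    have "endo (soliton_der_mat G) 6 u c = (\<Sum>a=1..6. soliton_der G (vec_single a 1) c * u a)"
      unfolding endo_def using True by (simp add: soliton_der_mat_def soliton_der_vec_single_real[OF hm])
    also have "\<dots> = soliton_der G u c" using soliton_der_linear[OF True] .
    finally show ?thesis .
  next
    case False
    then show ?thesis by (simp add: endo_outside soliton_der_def zcomb_outside)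
  qed
qed

lemma soliton_der_lie:
  assumes hm: "hermitian_metric g6_J 6 G"
  shows "soliton_der G (lie g6_bracket 6 u v) =
         (\<lambda>c. lie g6_bracket 6 (soliton_der G u) v c + lie g6_bracket 6 u (soliton_der G v) c)"
  unfolding lie_g6_in_frame soliton_der_def phi_zcomb gZ3bar_zcomb gZ3_zcomb zcomb_add
  unfolding soliton_const_complex[OF hm]
  by (simp add: algebra_simps)

lemma soliton_der_J: "soliton_der G (endo g6_J 6 u) = endo g6_J 6 (soliton_der G u)"
  unfolding soliton_der_def endo_g6_J_zcomb phi_endo_g6_J gZ3bar_def gZ3_def phi_zcomb
  by (simp add: algebra_simps)

lemma is_derivation_soliton_der_mat:
  assumes hm: "hermitian_metric g6_J 6 G"
  shows "is_derivation g6_bracket 6 (soliton_der_mat G)"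
  unfolding is_derivation_def
proof (intro allI)
  fix X Y :: "nat \<Rightarrow> real"
  show "endo (soliton_der_mat G) 6 (lie g6_bracket 6 X Y) =
    (\<lambda>c. lie g6_bracket 6 (endo (soliton_der_mat G) 6 X) Y c
         + lie g6_bracket 6 X (endo (soliton_der_mat G) 6 Y) c)"
    by (rule complexify_inject)
      (simp only: complexify_add complexify_endo complexify_lie endo_soliton_der_mat[OF hm]
        soliton_der_lie[OF hm])
qed

lemma soliton_der_mat_commutes_J:
  fixes X :: "nat \<Rightarrow> real"
  assumes hm: "hermitian_metric g6_J 6 G"
  shows "endo (soliton_der_mat G) 6 (endo g6_J 6 X) = endo g6_J 6 (endo (soliton_der_mat G) 6 X)"
  by (rule complexify_inject) (simp only: complexify_endo endo_soliton_der_mat[OF hm] soliton_der_J)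

lemma Theta_form_soliton:
  assumes hm: "hermitian_metric g6_J 6 G"
  shows "complex_of_real (gc G 6 (\<lambda>a. soliton_const G * X a + endo (soliton_der_mat G) 6 X a) Y) =
         Theta_form g6_bracket g6_J G 6 g6_frame 3 X Y"
proof -
  have shifted: "complexify (\<lambda>a. soliton_const G * X a + endo (soliton_der_mat G) 6 X a) =
        (\<lambda>a. complex_of_real (soliton_const G) * complexify X a + soliton_der G (complexify X) a)"
    using complexify_endo[of "soliton_der_mat G" 6 X]
    unfolding endo_soliton_der_mat[OF hm] by (auto simp: complexify_def fun_eq_iff)
  show ?thesis
    unfolding complexify_gc shifted Theta_form_g6[OF hm] gc_g6_in_frame[OF hermitian_metric_g6_gram[OF hm]]
      phi_linear
    unfolding soliton_der_def phi_zcomb theta_coeff_complex[OF hm, symmetric] gZ3bar_def gZ3_def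
    by (simp add: algebra_simps)
qed

theorem proposition4p4:
  fixes G :: "nat \<Rightarrow> nat \<Rightarrow> real"
  assumes "hermitian_metric g6_J 6 G"
  shows "\<exists>c<0. algebraic_HCF_soliton g6_bracket g6_J 6 g6_frame 3 G c"
proof -
  have "algebraic_HCF_soliton g6_bracket g6_J 6 g6_frame 3 G (soliton_const G)"
    unfolding algebraic_HCF_soliton_def
    using is_derivation_soliton_der_mat[OF assms] soliton_der_mat_commutes_J[OF assms]
      Theta_form_soliton[OF assms]
    by blast
  with soliton_const_neg[OF assms] show ?thesis by blast
qed

end
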